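(* Let $G$ be a finite simple graph with vertex set $V(G)$ and edge set $E(G)$, let $R$ be a nontrivial commutative ring, and let $\omega: E(G)\to R\setminus\{0\}$ be an edge weight. Let $\eta$ be a proper embedding of $G$ in the plane. Then for every proper embedding $\eta'$ of $G$ there is a sign-modification $\omega'$ of $\omega$ such that $$ s(G,\omega,\eta) = s(G,\omega',\eta'). $$
   Context: An embedding of a finite graph $G$ in $\mathbb{R}^2$ assigns to each vertex a distinct point (vertex-point) and to each edge $e=\{v_1,v_2\}$ a smooth curve $[0,1]\to\mathbb{R}^2$ (edge-curve) from the point of $v_1$ to the point of $v_2$ which does not pass twice through the same point and does not pass through any other vertex-point. The embedding is proper if, in addition, any two edge-curves meeting in a point that is not a vertex-point actually cross there (are not tangent there), and there are only finitely many such crossing points. A perfect matching of $G$ is a set $M\subseteq E(G)$ of edges such that every vertex is incident with exactly one edge of $M$. Its weight is $\omega(M)=\prod_{e\in M}\omega(e)$. For a proper embedding $\eta$, let $C(M,\eta)=\sum_{\{e_1,e_2\}\subseteq M}\left|\mathrm{img}(e_1)\cap\mathrm{img}(e_2)\right|$, where the sum is over unordered pairs of distinct edges of $M$ and $\mathrm{img}(e)$ is the image of the edge-curve of $e$ under $\eta$; the sign of $M$ is $\mathrm{sgn}(M,\eta)=(-1)^{C(M,\eta)}$. The signed generating function of perfect matchings is $s(G,\omega,\eta)=\sum_M \mathrm{sgn}(M,\eta)\,\omega(M)$, the sum over all perfect matchings $M$ of $G$. An edge weight $\omega'$ is a sign-modification of $\omega$ if for every $e\in E(G)$ either $\omega'(e)=\omega(e)$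 or $\omega'(e)=-\omega(e)$. *)

theory Defs
  imports "HOL-Analysis.Analysis"
begin

definition simple_graph :: "'v set \<Rightarrow> 'v set set \<Rightarrow> bool" where
  "simple_graph V E \<longleftrightarrow> finite V \<and> (\<forall>e\<in>E. e \<subseteq> V \<and> card e = 2)"

(* The plane R^2 is modelled as the complex numbers. *)
definition img :: "(real \<Rightarrow> complex) \<Rightarrow> complex set" where
  "img \<gamma> = \<gamma> ` {0..1}"

definition smooth_curve :: "(real \<Rightarrow> complex) \<Rightarrow> bool" where
  "smooth_curve \<gamma> \<longleftrightarrow>
     (\<exists>D. (\<forall>t\<in>{0..1}. (\<gamma> has_vector_derivative D t) (at t within {0..1}))
          \<and> continuous_on {0..1} D)"

definition embedding ::
  "'v set \<Rightarrow> 'v set set \<Rightarrow> ('v \<Rightarrow> complex) \<Rightarrow> ('v set \<Rightarrow> real \<Rightarrow> complex) \<Rightarrow> bool" where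
  "embedding V E pos crv \<longleftrightarrow>
     inj_on pos V \<and>
     (\<forall>e\<in>E. smooth_curve (crv e) \<and> inj_on (crv e) {0..1}
             \<and> {crv e 0, crv e 1} = pos ` e
             \<and> (\<forall>t\<in>{0<..<1}. crv e t \<notin> pos ` V))"

(* two tangent vectors are not parallel (determinant nonzero) *)
definition transversal :: "complex \<Rightarrow> complex \<Rightarrow> bool" where
  "transversal u v \<longleftrightarrow> Im (cnj u * v) \<noteq> 0"

definition proper_embedding ::
  "'v set \<Rightarrow> 'v set set \<Rightarrow> ('v \<Rightarrow> complex) \<Rightarrow> ('v set \<Rightarrow> real \<Rightarrow> complex) \<Rightarrow> bool" where
  "proper_embedding V E pos crv \<longleftrightarrow>
     embedding V E pos crv \<and>
     (\<forall>e1\<in>E. \<forall>e2\<in>E. \<forall>s\<in>{0..1}. \<forall>t\<in>{0..1}.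
        e1 \<noteq> e2 \<and> crv e1 s = crv e2 t \<and> crv e1 s \<notin> pos ` V \<longrightarrow>
        transversal (vector_derivative (crv e1) (at s within {0..1}))
                    (vector_derivative (crv e2) (at t within {0..1}))) \<and>
     finite {p. \<exists>e1\<in>E. \<exists>e2\<in>E. e1 \<noteq> e2 \<and> p \<in> img (crv e1) \<inter> img (crv e2) \<and> p \<notin> pos ` V}"

definition perfect_matching :: "'v set \<Rightarrow> 'v set set \<Rightarrow> 'v set set \<Rightarrow> bool" where
  "perfect_matching V E M \<longleftrightarrow> M \<subseteq> E \<and> (\<forall>v\<in>V. \<exists>!e. e \<in> M \<and> v \<in> e)"

definition crossings :: "('v set \<Rightarrow> real \<Rightarrow> complex) \<Rightarrow> 'v set set \<Rightarrow> nat" where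
  "crossings crv M = (\<Sum>P\<in>{P. P \<subseteq> M \<and> card P = 2}. card (\<Inter>e\<in>P. img (crv e)))"

definition signed_pm :: "'v set \<Rightarrow> 'v set set \<Rightarrow> ('v set \<Rightarrow> 'r::comm_ring_1)
     \<Rightarrow> ('v set \<Rightarrow> real \<Rightarrow> complex) \<Rightarrow> 'r" where
  "signed_pm V E \<omega> crv =
     (\<Sum>M\<in>{M. perfect_matching V E M}. (-1) ^ crossings crv M * (\<Prod>e\<in>M. \<omega> e))"

definition sign_modification :: "'v set set \<Rightarrow> ('v set \<Rightarrow> 'r::comm_ring_1) \<Rightarrow> ('v set \<Rightarrow> 'r) \<Rightarrow> bool" where
  "sign_modification E \<omega> \<omega>' \<longleftrightarrow> (\<forall>e\<in>E. \<omega>' e = \<omega> e \<or> \<omega>' e = - \<omega> e)"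

end

theory Submission
  imports Defs "HOL-Complex_Analysis.Complex_Analysis" "HOL-Number_Theory.Cong"
begin

text \<open>
  For two edge curves \<open>\<gamma>, \<delta>\<close> with disjoint endpoints, the map \<open>(s, t) \<mapsto> \<gamma> s - \<delta> t\<close> on the unit
  square vanishes exactly at the crossings, each of local degree \<open>\<plusminus>1\<close> by transversality. So the
  winding number of the image of the boundary of the square, which is
  \<open>wn(\<gamma>, \<delta> 0) - wn(\<gamma>, \<delta> 1) + wn(\<delta>, \<gamma> 1) - wn(\<delta>, \<gamma> 0)\<close>, has the parity of the number of
  crossings. Writing each of these winding numbers as an integer plus a difference of principal
  logarithms, the crossing parity of two disjoint edges becomes a sum of terms attached to an edge
  and a vertex, plus a term depending only on the directions between the four endpoints. For two
  drawings the latter terms combine into a symmetric function of pairs of vertices, so summing over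
  the pairs of edges of a perfect matching shows that its crossing parities in the two drawings
  differ by a sum over its edges plus a constant. Changing the signs of the weights edge by edge,
  and absorbing the constant at the edges through one fixed vertex, proves the theorem.
\<close>

section \<open>Crossings of two transversal curves\<close>

lemma zero_notin_segment_if_Im_cnj_mult:
  assumes "Im (cnj a * b) \<noteq> 0"
  shows "0 \<notin> closed_segment a b"
proof
  assume "0 \<in> closed_segment a b"
  then obtain u :: real where "0 \<le> u" "u \<le> 1" "(1 - u) *\<^sub>R a + u *\<^sub>R b = 0"
    by (auto simp: closed_segment_def)
  then have "(1 - u) *\<^sub>R (cnj a * a) + u *\<^sub>R (cnj a * b) = 0"
    by (metis (no_types, lifting) mult_zero_right distrib_left mult_scaleR_right)
  then have "u * Im (cnj a * b) = 0" by (simp add: complex_eq_iff)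
  moreover have "u \<noteq> 0"
    using \<open>(1 - u) *\<^sub>R a + u *\<^sub>R b = 0\<close> assms by auto
  ultimately show False using assms by simp
qed

lemma sgn_Re_winding_number_linepath:
  assumes "Im (cnj a * b) \<noteq> 0"
  shows "sgn (Re (winding_number (linepath a b) 0)) = sgn (Im (cnj a * b))"
proof (cases "0 < Im (cnj a * b)")
  case True
  then have "0 < Im ((b - a) * cnj (b - 0))" by (simp add: algebra_simps)
  then have "0 < Re (winding_number (linepath a b) 0)" by (rule winding_number_linepath_pos_lt)
  then show ?thesis using True by simp
next
  case False
  then have "0 < Im ((a - b) * cnj (a - 0))" using assms by (simp add: algebra_simps)
  then have "Re (winding_number (linepath a b) 0) < 0" by (rule winding_number_linepath_neg_lt)
  then show ?thesis using False assms by simp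
qed

text \<open>Each side contributes less than half a turn, all with the sign \<open>\<epsilon>\<close>.\<close>

lemma winding_number_quadrilateral:
  fixes P1 P2 P3 P4 :: complex and \<epsilon> :: real
  assumes "\<epsilon> \<noteq> 0"
    and "sgn (Im (cnj P1 * P2)) = \<epsilon>" "sgn (Im (cnj P2 * P3)) = \<epsilon>"
    and "sgn (Im (cnj P3 * P4)) = \<epsilon>" "sgn (Im (cnj P4 * P1)) = \<epsilon>"
  shows "winding_number (linepath P1 P2 +++ linepath P2 P3 +++ linepath P3 P4 +++ linepath P4 P1) 0
    = of_real \<epsilon>"
proof -
  let ?g = "linepath P1 P2 +++ linepath P2 P3 +++ linepath P3 P4 +++ linepath P4 P1"
  have nz: "Im (cnj P1 * P2) \<noteq> 0" "Im (cnj P2 * P3) \<noteq> 0" "Im (cnj P3 * P4) \<noteq> 0" "Im (cnj P4 * P1) \<noteq> 0"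
    using assms by (auto simp: sgn_0_0)
  have \<epsilon>: "\<epsilon> = 1 \<or> \<epsilon> = -1" using assms(2) nz(1) by (metis sgn_real_def)
  note avoid = nz[THEN zero_notin_segment_if_Im_cnj_mult]
  have w: "winding_number ?g 0 = winding_number (linepath P1 P2) 0 + winding_number (linepath P2 P3) 0
     + winding_number (linepath P3 P4) 0 + winding_number (linepath P4 P1) 0"
    using avoid by (simp add: winding_number_join path_image_join)
  have sg: "sgn (Re (winding_number (linepath P1 P2) 0)) = \<epsilon>" "sgn (Re (winding_number (linepath P2 P3) 0)) = \<epsilon>"
    "sgn (Re (winding_number (linepath P3 P4) 0)) = \<epsilon>" "sgn (Re (winding_number (linepath P4 P1) 0)) = \<epsilon>"
    using assms nz sgn_Re_winding_number_linepath by metis+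
  have half: "\<bar>Re (winding_number (linepath P1 P2) 0)\<bar> < 1/2" "\<bar>Re (winding_number (linepath P2 P3) 0)\<bar> < 1/2"
    "\<bar>Re (winding_number (linepath P3 P4) 0)\<bar> < 1/2" "\<bar>Re (winding_number (linepath P4 P1) 0)\<bar> < 1/2"
    using avoid winding_number_lt_half_linepath by blast+
  have "winding_number ?g 0 \<in> \<int>"
    using avoid by (intro integer_winding_number) (simp_all add: path_image_join)
  then obtain k where k: "winding_number ?g 0 = of_int k" by (auto elim: Ints_cases)
  have "Re (winding_number ?g 0) = of_int k" using k by simp
  then have "0 < \<epsilon> * of_int k" "\<bar>of_int k\<bar> < (2::real)"
    using \<epsilon> w sg half by (auto simp: sgn_real_def split: if_splits)
  moreover from this(2) have "\<bar>k\<bar> < 2" by linarith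
  ultimately have "k = 1 \<and> \<epsilon> = 1 \<or> k = -1 \<and> \<epsilon> = -1"
    using \<epsilon> by (auto simp: zero_less_mult_iff)
  then show ?thesis using k by auto
qed

lemma homotopic_loops_shrink_to_point:
  fixes g :: "real \<Rightarrow> 'a::real_normed_vector"
  assumes "convex S" "z \<in> S" "path g" "pathfinish g = pathstart g" "path_image g \<subseteq> S - {z}"
    and "0 < r" "r \<le> 1"
  shows "homotopic_loops (S - {z}) g (\<lambda>t. z + r *\<^sub>R (g t - z))"
proof (rule homotopic_loops_linear)
  show "path (\<lambda>t. z + r *\<^sub>R (g t - z))" "pathfinish (\<lambda>t. z + r *\<^sub>R (g t - z)) = pathstart (\<lambda>t. z + r *\<^sub>R (g t - z))"
    using assms(3,4) unfolding path_def pathstart_def pathfinish_def by (auto intro!: continuous_intros)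
  fix t :: real assume t: "t \<in> {0..1}"
  then have gt: "g t \<in> S" "g t \<noteq> z" using assms(5) by (auto simp: path_image_def image_subset_iff)
  show "closed_segment (g t) (z + r *\<^sub>R (g t - z)) \<subseteq> S - {z}"
  proof
    fix y assume "y \<in> closed_segment (g t) (z + r *\<^sub>R (g t - z))"
    then obtain \<mu> where \<mu>: "0 \<le> \<mu>" "\<mu> \<le> 1" "y = (1 - \<mu>) *\<^sub>R g t + \<mu> *\<^sub>R (z + r *\<^sub>R (g t - z))"
      by (auto simp: closed_segment_def)
    define \<kappa> where "\<kappa> = 1 - \<mu> + \<mu> * r"
    have "0 \<le> (1 - \<mu>) * (1 - r)" "0 \<le> \<mu> * (1 - r)" using \<mu> assms(7) by simp_all
    then have \<kappa>: "0 < \<kappa>" "\<kappa> \<le> 1" using assms(6) unfolding \<kappa>_def by (simp_all add: algebra_simps)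
    have y: "y = (1 - \<kappa>) *\<^sub>R z + \<kappa> *\<^sub>R g t"
      using \<mu>(3) by (simp add: \<kappa>_def algebra_simps)
    have "y \<in> S" unfolding y using \<kappa> gt assms(1,2) by (intro convexD) auto
    moreover have "y \<noteq> z"
      using \<kappa> gt by (auto simp: y algebra_simps)
    ultimately show "y \<in> S - {z}" by simp
  qed
qed (use assms in auto)

text \<open>A point \<open>x\<close> of the unit square stands for the pair of parameters \<open>(Re x, Im x)\<close>;
  the zeros of the crossing map are the crossings of the two curves.\<close>

definition crossing_map :: "(real \<Rightarrow> complex) \<Rightarrow> (real \<Rightarrow> complex) \<Rightarrow> complex \<Rightarrow> complex" where
  "crossing_map \<gamma> \<delta> x = \<gamma> (Re x) - \<delta> (Im x)"

definition crossing_linearization :: "complex \<Rightarrow> complex \<Rightarrow> complex \<Rightarrow> complex" where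
  "crossing_linearization u v x = Re x *\<^sub>R u - Im x *\<^sub>R v"

definition rectangle_loop :: "real \<Rightarrow> real \<Rightarrow> real \<Rightarrow> complex" where
  "rectangle_loop a b =
     linepath (\<i> * of_real a) (1 + \<i> * of_real a) +++ linepath (1 + \<i> * of_real a) (1 + \<i> * of_real b)
     +++ linepath (1 + \<i> * of_real b) (\<i> * of_real b) +++ linepath (\<i> * of_real b) (\<i> * of_real a)"

lemma path_rectangle_loop: "path (rectangle_loop a b)"
  and pathfinish_rectangle_loop: "pathfinish (rectangle_loop a b) = pathstart (rectangle_loop a b)"
  by (auto simp: rectangle_loop_def)

lemma crossing_map_rectangle_loop:
  "crossing_map \<gamma> \<delta> \<circ> rectangle_loop a b =
     (\<lambda>s. \<gamma> s - \<delta> a) +++ subpath a b (\<lambda>t. \<gamma> 1 - \<delta> t)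
     +++ reversepath (\<lambda>s. \<gamma> s - \<delta> b) +++ subpath b a (\<lambda>t. \<gamma> 0 - \<delta> t)"
proof -
  have "crossing_map \<gamma> \<delta> \<circ> linepath (\<i> * of_real a) (1 + \<i> * of_real a) = (\<lambda>s. \<gamma> s - \<delta> a)"
    and "crossing_map \<gamma> \<delta> \<circ> linepath (1 + \<i> * of_real a) (1 + \<i> * of_real b) = subpath a b (\<lambda>t. \<gamma> 1 - \<delta> t)"
    and "crossing_map \<gamma> \<delta> \<circ> linepath (1 + \<i> * of_real b) (\<i> * of_real b) = reversepath (\<lambda>s. \<gamma> s - \<delta> b)"
    and "crossing_map \<gamma> \<delta> \<circ> linepath (\<i> * of_real b) (\<i> * of_real a) = subpath b a (\<lambda>t. \<gamma> 0 - \<delta> t)"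
    by (auto simp: fun_eq_iff crossing_map_def linepath_def subpath_def reversepath_def algebra_simps)
  then show ?thesis unfolding rectangle_loop_def path_compose_join by simp
qed

lemma rectangle_loop_subset_cbox:
  assumes "a \<le> b"
  shows "path_image (rectangle_loop a b) \<subseteq> cbox (\<i> * of_real a) (1 + \<i> * of_real b)"
proof -
  let ?Q = "cbox (\<i> * of_real a) (1 + \<i> * of_real b)"
  have "\<i> * of_real a \<in> ?Q" "1 + \<i> * of_real a \<in> ?Q" "1 + \<i> * of_real b \<in> ?Q" "\<i> * of_real b \<in> ?Q"
    using assms by (auto simp: cbox_complex_eq)
  then show ?thesis unfolding rectangle_loop_def
    by (intro subset_trans[OF path_image_join_subset] Un_least closed_segment_subset convex_box | simp)+
qed

lemma rectangle_loop_subset_boundary: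
  "path_image (rectangle_loop a b) \<subseteq> {x. Re x = 0 \<or> Re x = 1 \<or> Im x = a \<or> Im x = b}"
proof -
  have convex: "convex {x::complex. Re x = c}" "convex {x::complex. Im x = c}" for c
    by (auto simp: convex_def simp flip: distrib_right)
  have "closed_segment (\<i> * of_real a) (1 + \<i> * of_real a) \<subseteq> {x. Im x = a}"
    "closed_segment (1 + \<i> * of_real a) (1 + \<i> * of_real b) \<subseteq> {x. Re x = 1}"
    "closed_segment (1 + \<i> * of_real b) (\<i> * of_real b) \<subseteq> {x. Im x = b}"
    "closed_segment (\<i> * of_real b) (\<i> * of_real a) \<subseteq> {x. Re x = 0}"
    by (intro closed_segment_subset convex; simp)+
  then show ?thesis unfolding rectangle_loop_def
    by (intro subset_trans[OF path_image_join_subset] Un_least; auto)+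
qed

lemma continuous_on_crossing_map:
  assumes "path \<gamma>" "path \<delta>" "S \<subseteq> cbox 0 (1 + \<i>)"
  shows "continuous_on S (crossing_map \<gamma> \<delta>)"
proof -
  have "continuous_on S (\<lambda>x. \<gamma> (Re x))"
    by (rule continuous_on_compose2[of "{0..1}" \<gamma> S Re])
       (use assms in \<open>auto simp: path_def cbox_complex_eq intro!: continuous_intros\<close>)
  moreover have "continuous_on S (\<lambda>x. \<delta> (Im x))"
    by (rule continuous_on_compose2[of "{0..1}" \<delta> S Im])
       (use assms in \<open>auto simp: path_def cbox_complex_eq intro!: continuous_intros\<close>)
  ultimately show ?thesis unfolding crossing_map_def by (intro continuous_intros)
qed

lemma transversal_linearization_lower_bound:
  "\<bar>Im (cnj u * v)\<bar> * (\<bar>x\<bar> + \<bar>y\<bar>) \<le> (norm u + norm v) * norm (x *\<^sub>R u - y *\<^sub>R v)"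
proof -
  define X where "X = x *\<^sub>R u - y *\<^sub>R v"
  have "Im (cnj u * X) = - y * Im (cnj u * v)" "Im (cnj v * X) = - x * Im (cnj u * v)"
    by (simp_all add: X_def scaleR_conv_of_real algebra_simps)
  moreover have "\<bar>Im (cnj w * X)\<bar> \<le> norm w * norm X" for w
    by (metis abs_Im_le_cmod complex_mod_cnj norm_mult)
  ultimately have "\<bar>y\<bar> * \<bar>Im (cnj u * v)\<bar> \<le> norm u * norm X" "\<bar>x\<bar> * \<bar>Im (cnj u * v)\<bar> \<le> norm v * norm X"
    by (metis abs_minus_cancel abs_mult mult_minus_left)+
  then show ?thesis unfolding X_def by (simp add: algebra_simps)
qed

text \<open>The first-order errors are kept below a quarter of the lower bound for the linearization
  that transversality provides.\<close>

lemma transversal_crossing_linearization: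
  fixes \<gamma> \<delta> :: "real \<Rightarrow> complex"
  assumes "(\<gamma> has_vector_derivative u) (at (Re z) within {0..1})"
    and "(\<delta> has_vector_derivative v) (at (Im z) within {0..1})"
    and "transversal u v" "\<gamma> (Re z) = \<delta> (Im z)"
  obtains d where "0 < d"
    "\<And>w. Re w \<in> {0..1} \<Longrightarrow> Im w \<in> {0..1} \<Longrightarrow> \<bar>Re (w - z)\<bar> < d \<Longrightarrow> \<bar>Im (w - z)\<bar> < d \<Longrightarrow> w \<noteq> z \<Longrightarrow>
       norm (crossing_map \<gamma> \<delta> w - crossing_linearization u v (w - z))
         < norm (crossing_linearization u v (w - z))"
proof -
  define \<sigma> where "\<sigma> = \<bar>Im (cnj u * v)\<bar>"
  define M where "M = norm u + norm v"
  have \<sigma>: "0 < \<sigma>" using assms(3) by (simp add: \<sigma>_def transversal_def)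
  then have "u \<noteq> 0" by (auto simp: \<sigma>_def)
  then have M: "0 < M" by (simp add: M_def add_pos_nonneg)
  define e where "e = \<sigma> / (4 * M)"
  have e: "0 < e" using \<sigma> M by (simp add: e_def)
  obtain d1 where d1: "d1 > 0" and d1': "\<And>y. y \<in> {0..1} \<Longrightarrow> norm (y - Re z) < d1 \<Longrightarrow>
      norm (\<gamma> y - \<gamma> (Re z) - (y - Re z) *\<^sub>R u) \<le> e * norm (y - Re z)"
    using assms(1) e unfolding has_vector_derivative_def has_derivative_within_alt by meson
  obtain d2 where d2: "d2 > 0" and d2': "\<And>y. y \<in> {0..1} \<Longrightarrow> norm (y - Im z) < d2 \<Longrightarrow>
      norm (\<delta> y - \<delta> (Im z) - (y - Im z) *\<^sub>R v) \<le> e * norm (y - Im z)"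
    using assms(2) e unfolding has_vector_derivative_def has_derivative_within_alt by meson
  show ?thesis
  proof (rule that[of "min d1 d2"])
    fix w assume w: "Re w \<in> {0..1}" "Im w \<in> {0..1}" "\<bar>Re (w - z)\<bar> < min d1 d2" "\<bar>Im (w - z)\<bar> < min d1 d2" "w \<noteq> z"
    define ds where "ds = Re (w - z)"
    define dt where "dt = Im (w - z)"
    have "0 < \<bar>ds\<bar> + \<bar>dt\<bar>" using w(5) by (auto simp: ds_def dt_def complex_eq_iff)
    have "norm (\<gamma> (Re w) - \<gamma> (Re z) - ds *\<^sub>R u) \<le> e * \<bar>ds\<bar>"
      using d1'[OF w(1)] w(3) by (simp add: ds_def)
    moreover have "norm (\<delta> (Im w) - \<delta> (Im z) - dt *\<^sub>R v) \<le> e * \<bar>dt\<bar>"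
      using d2'[OF w(2)] w(4) by (simp add: dt_def)
    moreover have "crossing_map \<gamma> \<delta> w - crossing_linearization u v (w - z)
        = (\<gamma> (Re w) - \<gamma> (Re z) - ds *\<^sub>R u) - (\<delta> (Im w) - \<delta> (Im z) - dt *\<^sub>R v)"
      using assms(4) by (simp add: crossing_map_def crossing_linearization_def ds_def dt_def)
    ultimately have "norm (crossing_map \<gamma> \<delta> w - crossing_linearization u v (w - z)) \<le> e * \<bar>ds\<bar> + e * \<bar>dt\<bar>"
      by (simp only:) (rule order_trans[OF norm_triangle_ineq4 add_mono])
    also have "\<dots> = \<sigma> * (\<bar>ds\<bar> + \<bar>dt\<bar>) / M / 4"
      using M by (simp add: e_def field_simps)
    also have "\<dots> < \<sigma> * (\<bar>ds\<bar> + \<bar>dt\<bar>) / M"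
      using \<sigma> M \<open>0 < \<bar>ds\<bar> + \<bar>dt\<bar>\<close> by (simp add: divide_strict_left_mono)
    also have "\<dots> \<le> norm (crossing_linearization u v (w - z))"
    proof -
      have "\<sigma> * (\<bar>ds\<bar> + \<bar>dt\<bar>) \<le> M * norm (crossing_linearization u v (w - z))"
        using transversal_linearization_lower_bound[of u v ds dt]
        by (simp add: crossing_linearization_def ds_def dt_def \<sigma>_def M_def)
      then show ?thesis using M by (simp add: pos_divide_le_eq mult.commute)
    qed
    finally show "norm (crossing_map \<gamma> \<delta> w - crossing_linearization u v (w - z))
         < norm (crossing_linearization u v (w - z))" .
  qed (use d1 d2 in auto)
qed

lemma Im_cnj_mult_crossing_linearization:
  "Im (cnj (crossing_linearization u v x) * crossing_linearization u v y) = Im (cnj x * y) * Im (cnj v * u)"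
  by (simp add: crossing_linearization_def algebra_simps)

lemma winding_number_linearized_rectangle:
  assumes "transversal u v" "0 < Re z" "Re z < 1" "a < Im z" "Im z < b" "0 < r"
  shows "winding_number (\<lambda>t. crossing_linearization u v (r *\<^sub>R (rectangle_loop a b t - z))) 0 \<in> {1, -1}"
proof -
  define \<Phi> where "\<Phi> w = crossing_linearization u v (r *\<^sub>R (w - z))" for w
  have \<Phi>_linepath: "\<Phi> \<circ> linepath p q = linepath (\<Phi> p) (\<Phi> q)" for p q
    by (rule ext) (simp add: \<Phi>_def crossing_linearization_def linepath_def algebra_simps)
  define c1 where "c1 = \<i> * of_real a"
  define c2 where "c2 = 1 + \<i> * of_real a"
  define c3 where "c3 = 1 + \<i> * of_real b"
  define c4 where "c4 = \<i> * of_real b"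
  have "(\<lambda>t. crossing_linearization u v (r *\<^sub>R (rectangle_loop a b t - z))) = \<Phi> \<circ> rectangle_loop a b"
    by (simp add: \<Phi>_def o_def)
  also have "\<dots> = linepath (\<Phi> c1) (\<Phi> c2) +++ linepath (\<Phi> c2) (\<Phi> c3) +++ linepath (\<Phi> c3) (\<Phi> c4)
      +++ linepath (\<Phi> c4) (\<Phi> c1)"
    unfolding rectangle_loop_def path_compose_join \<Phi>_linepath c1_def c2_def c3_def c4_def ..
  finally have loop: "(\<lambda>t. crossing_linearization u v (r *\<^sub>R (rectangle_loop a b t - z)))
      = linepath (\<Phi> c1) (\<Phi> c2) +++ linepath (\<Phi> c2) (\<Phi> c3) +++ linepath (\<Phi> c3) (\<Phi> c4)
      +++ linepath (\<Phi> c4) (\<Phi> c1)" .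
  define \<tau> where "\<tau> = Im (cnj v * u)"
  have "\<tau> \<noteq> 0" using assms(1) by (simp add: \<tau>_def transversal_def algebra_simps)
  have \<Phi>: "Im (cnj (\<Phi> p) * \<Phi> q) = r\<^sup>2 * Im (cnj (p - z) * (q - z)) * \<tau>" for p q
    unfolding \<Phi>_def Im_cnj_mult_crossing_linearization \<tau>_def by (simp add: power2_eq_square algebra_simps)
  have "Im (cnj (c1 - z) * (c2 - z)) = Im z - a" "Im (cnj (c2 - z) * (c3 - z)) = (1 - Re z) * (b - a)"
    "Im (cnj (c3 - z) * (c4 - z)) = b - Im z" "Im (cnj (c4 - z) * (c1 - z)) = Re z * (b - a)"
    by (simp_all add: c1_def c2_def c3_def c4_def algebra_simps)
  then have "0 < Im (cnj (c1 - z) * (c2 - z))" "0 < Im (cnj (c2 - z) * (c3 - z))"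
    "0 < Im (cnj (c3 - z) * (c4 - z))" "0 < Im (cnj (c4 - z) * (c1 - z))"
    using assms by simp_all
  then have "sgn (Im (cnj (\<Phi> c1) * \<Phi> c2)) = sgn \<tau>" "sgn (Im (cnj (\<Phi> c2) * \<Phi> c3)) = sgn \<tau>"
    "sgn (Im (cnj (\<Phi> c3) * \<Phi> c4)) = sgn \<tau>" "sgn (Im (cnj (\<Phi> c4) * \<Phi> c1)) = sgn \<tau>"
    using assms(6) unfolding \<Phi> by (simp_all add: sgn_mult)
  then have "winding_number (linepath (\<Phi> c1) (\<Phi> c2) +++ linepath (\<Phi> c2) (\<Phi> c3) +++ linepath (\<Phi> c3) (\<Phi> c4)
      +++ linepath (\<Phi> c4) (\<Phi> c1)) 0 = of_real (sgn \<tau>)"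
    using \<open>\<tau> \<noteq> 0\<close> by (intro winding_number_quadrilateral) (simp_all add: sgn_0_0)
  then show ?thesis unfolding loop using \<open>\<tau> \<noteq> 0\<close> by (auto simp: sgn_real_def)
qed

lemma winding_number_const_minus:
  assumes "valid_path \<delta>" "c \<notin> path_image \<delta>"
  shows "winding_number (\<lambda>t. c - \<delta> t) 0 = winding_number \<delta> c"
proof -
  have "valid_path (\<lambda>t. \<delta> t - c)"
    using valid_path_translation_eq[of "-c" \<delta>] assms(1) by (simp add: o_def)
  moreover have "0 \<notin> path_image (\<lambda>t. \<delta> t - c)" using assms(2) by (auto simp: path_image_def)
  ultimately have "winding_number (uminus \<circ> (\<lambda>t. \<delta> t - c)) 0 = winding_number (\<lambda>t. \<delta> t - c) 0"
    by (rule winding_number_negatepath)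
  then show ?thesis by (simp add: o_def flip: winding_number_offset)
qed

lemma finite_gap_above_Min:
  fixes H :: "real set"
  assumes "finite H" "H \<noteq> {}" "\<And>h. h \<in> H \<Longrightarrow> h < b"
  obtains c where "Min H < c" "c < b" "\<And>h. h \<in> H \<Longrightarrow> h \<noteq> Min H \<Longrightarrow> c < h"
proof -
  define b' where "b' = Min (insert b (H - {Min H}))"
  have "Min H < b" using assms Min_in by blast
  moreover have "Min H < h" if "h \<in> H" "h \<noteq> Min H" for h
    using assms(1) that by (simp add: order.not_eq_order_implies_strict)
  ultimately have "Min H < b'" using assms(1) by (simp add: b'_def)
  moreover have "b' \<le> b" "\<And>h. h \<in> H \<Longrightarrow> h \<noteq> Min H \<Longrightarrow> b' \<le> h"
    using assms(1) by (simp_all add: b'_def)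
  ultimately show ?thesis by (intro that[of "(Min H + b') / 2"]) force+
qed

locale transverse_curves =
  fixes \<gamma> \<delta> :: "real \<Rightarrow> complex"
  assumes valid_\<gamma>: "valid_path \<gamma>" and valid_\<delta>: "valid_path \<delta>"
    and inj_\<gamma>: "inj_on \<gamma> {0..1}" and inj_\<delta>: "inj_on \<delta> {0..1}"
    and ends_\<gamma>: "\<gamma> 0 \<notin> path_image \<delta>" "\<gamma> 1 \<notin> path_image \<delta>"
    and ends_\<delta>: "\<delta> 0 \<notin> path_image \<gamma>" "\<delta> 1 \<notin> path_image \<gamma>"
    and finite_crossings: "finite (path_image \<gamma> \<inter> path_image \<delta>)"
    and transversal_crossings: "\<And>s t. s \<in> {0..1} \<Longrightarrow> t \<in> {0..1} \<Longrightarrow> \<gamma> s = \<delta> t \<Longrightarrow>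
       \<exists>u v. (\<gamma> has_vector_derivative u) (at s within {0..1}) \<and>
             (\<delta> has_vector_derivative v) (at t within {0..1}) \<and> transversal u v"
begin

lemma path_\<gamma>: "path \<gamma>" and path_\<delta>: "path \<delta>"
  using valid_\<gamma> valid_\<delta> valid_path_imp_path by blast+

definition crossing_params :: "complex set" where
  "crossing_params = {x. Re x \<in> {0..1} \<and> Im x \<in> {0..1} \<and> \<gamma> (Re x) = \<delta> (Im x)}"

definition strip_winding :: "real \<Rightarrow> real \<Rightarrow> complex" where
  "strip_winding a b = winding_number (crossing_map \<gamma> \<delta> \<circ> rectangle_loop a b) 0"

definition side_winding :: "complex \<Rightarrow> real \<Rightarrow> real \<Rightarrow> complex" where
  "side_winding p a b = winding_number (subpath a b (\<lambda>t. p - \<delta> t)) 0"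

lemma crossing_map_eq_0_iff:
  "Re x \<in> {0..1} \<Longrightarrow> Im x \<in> {0..1} \<Longrightarrow> crossing_map \<gamma> \<delta> x = 0 \<longleftrightarrow> x \<in> crossing_params"
  by (simp add: crossing_map_def crossing_params_def)

lemma crossing_params_Im_inj:
  assumes "x \<in> crossing_params" "y \<in> crossing_params" "Im x = Im y"
  shows "x = y"
proof -
  have "\<gamma> (Re x) = \<gamma> (Re y)" "Re x \<in> {0..1}" "Re y \<in> {0..1}"
    using assms by (auto simp: crossing_params_def)
  then have "Re x = Re y" using inj_\<gamma> by (meson inj_onD)
  then show ?thesis using assms(3) by (simp add: complex_eq_iff)
qed

lemma bij_betw_crossing_params:
  "bij_betw (\<lambda>x. \<gamma> (Re x)) crossing_params (path_image \<gamma> \<inter> path_image \<delta>)"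
proof (rule bij_betwI')
  fix x y assume xy: "x \<in> crossing_params" "y \<in> crossing_params"
  show "\<gamma> (Re x) = \<gamma> (Re y) \<longleftrightarrow> x = y"
  proof
    assume "\<gamma> (Re x) = \<gamma> (Re y)"
    then have "Re x = Re y" "Im x = Im y"
      using xy inj_\<gamma> inj_\<delta> unfolding crossing_params_def by (metis (mono_tags) inj_onD mem_Collect_eq)+
    then show "x = y" by (simp add: complex_eq_iff)
  qed simp
next
  fix x assume "x \<in> crossing_params"
  then have "Re x \<in> {0..1}" "Im x \<in> {0..1}" "\<gamma> (Re x) = \<delta> (Im x)"
    unfolding crossing_params_def by auto
  then show "\<gamma> (Re x) \<in> path_image \<gamma> \<inter> path_image \<delta>"
    unfolding path_image_def by (metis IntI image_eqI)
next
  fix p assume "p \<in> path_image \<gamma> \<inter> path_image \<delta>"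
  then obtain s t where "s \<in> {0..1}" "t \<in> {0..1}" "p = \<gamma> s" "p = \<delta> t"
    unfolding path_image_def by auto
  then show "\<exists>x\<in>crossing_params. p = \<gamma> (Re x)"
    by (intro bexI[of _ "Complex s t"]) (auto simp: crossing_params_def)
qed

lemma finite_crossing_params: "finite crossing_params"
  and card_crossing_params: "card crossing_params = card (path_image \<gamma> \<inter> path_image \<delta>)"
  using bij_betw_crossing_params finite_crossings bij_betw_finite bij_betw_same_card by blast+

lemma crossing_params_interior:
  assumes "x \<in> crossing_params"
  shows "0 < Re x" "Re x < 1" "0 < Im x" "Im x < 1"
proof -
  have x: "Re x \<in> {0..1}" "Im x \<in> {0..1}" "\<gamma> (Re x) = \<delta> (Im x)"
    using assms by (auto simp: crossing_params_def)
  have "\<gamma> (Re x) \<in> path_image \<gamma>" "\<delta> (Im x) \<in> path_image \<delta>"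
    using x(1,2) unfolding path_image_def by auto
  then show "0 < Re x" "Re x < 1" "0 < Im x" "Im x < 1"
    using x ends_\<gamma> ends_\<delta> by (metis atLeastAtMost_iff order_less_le)+
qed

lemma strip_winding_eq:
  assumes a: "a \<in> {0..1}" and b: "b \<in> {0..1}"
    and no_crossing: "\<forall>x\<in>crossing_params. Im x \<noteq> a \<and> Im x \<noteq> b"
  shows "strip_winding a b
    = winding_number \<gamma> (\<delta> a) + side_winding (\<gamma> 1) a b - winding_number \<gamma> (\<delta> b) - side_winding (\<gamma> 0) a b"
proof -
  let ?P1 = "\<lambda>s. \<gamma> s - \<delta> a" and ?P2 = "subpath a b (\<lambda>t. \<gamma> 1 - \<delta> t)"
    and ?P3 = "reversepath (\<lambda>s. \<gamma> s - \<delta> b)" and ?P4 = "subpath b a (\<lambda>t. \<gamma> 0 - \<delta> t)"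
  have path_minus: "path (\<lambda>t. p - \<delta> t)" "path (\<lambda>s. \<gamma> s - p)" for p
    using path_\<gamma> path_\<delta> unfolding path_def by (auto intro!: continuous_on_diff)
  have horizontal: "0 \<notin> path_image (\<lambda>s. \<gamma> s - \<delta> c)" if "c \<in> {0..1}" "\<forall>x\<in>crossing_params. Im x \<noteq> c" for c
  proof
    assume "0 \<in> path_image (\<lambda>s. \<gamma> s - \<delta> c)"
    then obtain s where "s \<in> {0..1}" "\<gamma> s = \<delta> c" by (auto simp: path_image_def)
    then have "Complex s c \<in> crossing_params" using that by (auto simp: crossing_params_def)
    then show False using that by fastforce
  qed
  have vertical: "0 \<notin> path_image (subpath c d (\<lambda>t. p - \<delta> t))"
    if "c \<in> {0..1}" "d \<in> {0..1}" "p \<notin> path_image \<delta>" for c d p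
    using that path_image_subpath_subset[of c d "\<lambda>t. p - \<delta> t"]
    by (auto simp: path_image_def)
  have p: "path ?P1" "path ?P2" "path ?P3" "path ?P4"
    using path_minus a b by auto
  have n: "0 \<notin> path_image ?P1" "0 \<notin> path_image ?P2" "0 \<notin> path_image ?P3" "0 \<notin> path_image ?P4"
    using horizontal[OF a] horizontal[OF b] no_crossing vertical[OF a b ends_\<gamma>(2)] vertical[OF b a ends_\<gamma>(1)]
    by auto
  have e: "pathfinish ?P1 = pathstart ?P2" "pathfinish ?P2 = pathstart ?P3" "pathfinish ?P3 = pathstart ?P4"
    by (auto simp: pathstart_def pathfinish_def reversepath_def subpath_def)
  have "strip_winding a b = winding_number ?P1 0 + winding_number ?P2 0 + winding_number ?P3 0 + winding_number ?P4 0"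
    unfolding strip_winding_def crossing_map_rectangle_loop using p n e
    by (simp add: winding_number_join not_in_path_image_join path_join_imp)
  also have "winding_number ?P1 0 = winding_number \<gamma> (\<delta> a)"
    by (simp add: winding_number_offset[of \<gamma> "\<delta> a"])
  also have "winding_number ?P3 0 = - winding_number \<gamma> (\<delta> b)"
    using p n by (simp add: winding_number_reversepath winding_number_offset[of \<gamma> "\<delta> b"])
  also have "winding_number ?P4 0 = - side_winding (\<gamma> 0) a b"
    unfolding side_winding_def using n(4) path_minus a b
    by (metis path_image_reversepath path_subpath reversepath_subpath winding_number_reversepath)
  finally show ?thesis by (simp add: side_winding_def)
qed

lemma strip_winding_add:
  assumes "a \<in> {0..1}" "b \<in> {0..1}" "c \<in> {0..1}"
    and "\<forall>x\<in>crossing_params. Im x \<noteq> a \<and> Im x \<noteq> b \<and> Im x \<noteq> c"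
  shows "strip_winding a c = strip_winding a b + strip_winding b c"
proof -
  have "side_winding p a b + side_winding p b c = side_winding p a c" if "p \<notin> path_image \<delta>" for p
    unfolding side_winding_def using that assms(1-3) path_\<delta>
    by (intro winding_number_subpath_combine) (auto simp: path_image_def path_def intro: continuous_intros)
  then have w1: "side_winding (\<gamma> 1) a b + side_winding (\<gamma> 1) b c = side_winding (\<gamma> 1) a c"
    and w0: "side_winding (\<gamma> 0) a b + side_winding (\<gamma> 0) b c = side_winding (\<gamma> 0) a c"
    using ends_\<gamma> by auto
  have ab: "strip_winding a b = winding_number \<gamma> (\<delta> a) + side_winding (\<gamma> 1) a b
      - winding_number \<gamma> (\<delta> b) - side_winding (\<gamma> 0) a b"
    and bc: "strip_winding b c = winding_number \<gamma> (\<delta> b) + side_winding (\<gamma> 1) b c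
      - winding_number \<gamma> (\<delta> c) - side_winding (\<gamma> 0) b c"
    and ac: "strip_winding a c = winding_number \<gamma> (\<delta> a) + side_winding (\<gamma> 1) a c
      - winding_number \<gamma> (\<delta> c) - side_winding (\<gamma> 0) a c"
    using assms by (simp_all add: strip_winding_eq)
  show ?thesis unfolding ab bc ac w1[symmetric] w0[symmetric] by (simp add: algebra_simps)
qed

lemma strip_winding_eq_0:
  assumes a: "a \<in> {0..1}" and b: "b \<in> {0..1}" and "a \<le> b"
    and no_crossing: "\<forall>x\<in>crossing_params. \<not> (a \<le> Im x \<and> Im x \<le> b)"
  shows "strip_winding a b = 0"
proof -
  let ?Q = "cbox (\<i> * of_real a) (1 + \<i> * of_real b)"
  have Q: "?Q \<subseteq> cbox 0 (1 + \<i>)" "\<i> * of_real a \<in> ?Q"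
    using assms by (auto simp: cbox_complex_eq)
  have "homotopic_loops ?Q (rectangle_loop a b) (\<lambda>_. \<i> * of_real a)"
  proof (rule homotopic_loops_linear)
    fix t :: real assume "t \<in> {0..1}"
    then have "rectangle_loop a b t \<in> ?Q"
      using rectangle_loop_subset_cbox[OF \<open>a \<le> b\<close>] by (auto simp: path_image_def)
    then show "closed_segment (rectangle_loop a b t) (\<i> * of_real a) \<subseteq> ?Q"
      using Q(2) by (intro closed_segment_subset convex_box) auto
  qed (use path_rectangle_loop pathfinish_rectangle_loop in \<open>auto simp: pathstart_def pathfinish_def path_const\<close>)
  then have "homotopic_loops (-{0}) (crossing_map \<gamma> \<delta> \<circ> rectangle_loop a b) (crossing_map \<gamma> \<delta> \<circ> (\<lambda>_. \<i> * of_real a))"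
  proof (rule homotopic_loops_continuous_image)
    show "continuous_on ?Q (crossing_map \<gamma> \<delta>)" using continuous_on_crossing_map[OF path_\<gamma> path_\<delta> Q(1)] .
    show "crossing_map \<gamma> \<delta> \<in> ?Q \<rightarrow> - {0}"
      using Q(1) no_crossing crossing_map_eq_0_iff by (fastforce simp: cbox_complex_eq)
  qed
  then have "strip_winding a b = winding_number (crossing_map \<gamma> \<delta> \<circ> (\<lambda>_. \<i> * of_real a)) 0"
    unfolding strip_winding_def by (rule winding_number_homotopic_loops)
  also have "\<dots> = 0"
    using no_crossing crossing_map_eq_0_iff[of "\<i> * of_real a"] assms by (intro winding_number_constI) auto
  finally show ?thesis .
qed

lemma strip_winding_shrink:
  assumes "a \<in> {0..1}" "b \<in> {0..1}" "z \<in> crossing_params" "a < Im z" "Im z < b"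
    and only_z: "\<And>x. x \<in> crossing_params \<Longrightarrow> a \<le> Im x \<Longrightarrow> Im x \<le> b \<Longrightarrow> x = z"
    and "0 < r" "r \<le> 1"
  shows "strip_winding a b = winding_number (crossing_map \<gamma> \<delta> \<circ> (\<lambda>t. z + r *\<^sub>R (rectangle_loop a b t - z))) 0"
proof -
  let ?Q = "cbox (\<i> * of_real a) (1 + \<i> * of_real b)"
  have Q: "?Q \<subseteq> cbox 0 (1 + \<i>)" "z \<in> ?Q"
    using assms(1-5) crossing_params_interior[OF assms(3)] by (auto simp: cbox_complex_eq)
  have "path_image (rectangle_loop a b) \<subseteq> ?Q - {z}"
    using rectangle_loop_subset_cbox[of a b] rectangle_loop_subset_boundary[of a b] assms(4,5)
      crossing_params_interior[OF assms(3)] by auto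
  then have "homotopic_loops (?Q - {z}) (rectangle_loop a b) (\<lambda>t. z + r *\<^sub>R (rectangle_loop a b t - z))"
    using Q assms(7,8) path_rectangle_loop pathfinish_rectangle_loop
    by (intro homotopic_loops_shrink_to_point convex_box) auto
  then have "homotopic_loops (-{0}) (crossing_map \<gamma> \<delta> \<circ> rectangle_loop a b)
      (crossing_map \<gamma> \<delta> \<circ> (\<lambda>t. z + r *\<^sub>R (rectangle_loop a b t - z)))"
  proof (rule homotopic_loops_continuous_image)
    show "continuous_on (?Q - {z}) (crossing_map \<gamma> \<delta>)"
      using Q by (intro continuous_on_crossing_map path_\<gamma> path_\<delta>) auto
    show "crossing_map \<gamma> \<delta> \<in> ?Q - {z} \<rightarrow> - {0}"
      using Q(1) only_z crossing_map_eq_0_iff by (fastforce simp: cbox_complex_eq)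
  qed
  then show ?thesis unfolding strip_winding_def by (rule winding_number_homotopic_loops)
qed

lemma winding_shrunk_rectangle_linearized:
  assumes "a \<in> {0..1}" "b \<in> {0..1}" "z \<in> crossing_params" "a < Im z" "Im z < b"
    and r: "0 < r" "r \<le> 1" "r < d"
    and linearization: "\<And>w. Re w \<in> {0..1} \<Longrightarrow> Im w \<in> {0..1} \<Longrightarrow> \<bar>Re (w - z)\<bar> < d \<Longrightarrow> \<bar>Im (w - z)\<bar> < d \<Longrightarrow>
       w \<noteq> z \<Longrightarrow> norm (crossing_map \<gamma> \<delta> w - crossing_linearization u v (w - z))
         < norm (crossing_linearization u v (w - z))"
  shows "winding_number (crossing_map \<gamma> \<delta> \<circ> (\<lambda>t. z + r *\<^sub>R (rectangle_loop a b t - z))) 0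
    = winding_number (\<lambda>t. crossing_linearization u v (r *\<^sub>R (rectangle_loop a b t - z))) 0"
proof (rule winding_number_nearby_loops_eq)
  let ?Q = "cbox (\<i> * of_real a) (1 + \<i> * of_real b)" and ?R = "rectangle_loop a b"
  define Rl where "Rl t = z + r *\<^sub>R (?R t - z)" for t
  have Q: "?Q \<subseteq> cbox 0 (1 + \<i>)" "z \<in> ?Q"
    using assms(1-5) crossing_params_interior[OF assms(3)] by (auto simp: cbox_complex_eq)
  have "path_image ?R \<subseteq> ?Q - {z}"
    using rectangle_loop_subset_cbox[of a b] rectangle_loop_subset_boundary[of a b] assms(4,5)
      crossing_params_interior[OF assms(3)] by auto
  then have R: "?R t \<in> ?Q - {z}" if "t \<in> {0..1}" for t
    using that unfolding path_image_def by (metis image_subset_iff)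
  have RlQ: "Rl t \<in> ?Q" if "t \<in> {0..1}" for t
    using convexD[OF convex_box(1) Q(2) DiffD1[OF R[OF that]], of "1 - r" r] r by (simp add: Rl_def algebra_simps)
  then have "Rl ` {0..1} \<subseteq> cbox 0 (1 + \<i>)" using Q(1) by blast
  moreover have "path Rl" "pathfinish Rl = pathstart Rl"
    using path_rectangle_loop pathfinish_rectangle_loop unfolding Rl_def path_def pathstart_def pathfinish_def
    by (auto intro!: continuous_intros)
  ultimately show "path (crossing_map \<gamma> \<delta> \<circ> Rl)" "pathfinish (crossing_map \<gamma> \<delta> \<circ> Rl) = pathstart (crossing_map \<gamma> \<delta> \<circ> Rl)"
    by (auto simp: path_image_def pathstart_def pathfinish_def
        intro!: path_continuous_image continuous_on_crossing_map path_\<gamma> path_\<delta>)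
  have "continuous_on UNIV (\<lambda>w. crossing_linearization u v (r *\<^sub>R (w - z)))"
    unfolding crossing_linearization_def by (intro continuous_intros)
  then have "path ((\<lambda>w. crossing_linearization u v (r *\<^sub>R (w - z))) \<circ> ?R)"
    by (intro path_continuous_image path_rectangle_loop) (erule continuous_on_subset, simp)
  then show "path (\<lambda>t. crossing_linearization u v (r *\<^sub>R (?R t - z)))"
    by (simp add: o_def)
  show "pathfinish (\<lambda>t. crossing_linearization u v (r *\<^sub>R (?R t - z)))
       = pathstart (\<lambda>t. crossing_linearization u v (r *\<^sub>R (?R t - z)))"
    using pathfinish_rectangle_loop by (simp add: pathstart_def pathfinish_def)
  fix t :: real assume t: "t \<in> {0..1}"
  have "?R t \<in> cbox 0 (1 + \<i>)" "z \<in> cbox 0 (1 + \<i>)"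
    using R[OF t] Q by blast+
  then have "\<bar>Re (?R t - z)\<bar> \<le> 1" "\<bar>Im (?R t - z)\<bar> \<le> 1"
    by (auto simp: cbox_complex_eq abs_le_iff)
  moreover have small: "r * \<bar>x\<bar> < d" if "\<bar>x\<bar> \<le> 1" for x
    using mult_left_le[OF that, of r] r by linarith
  moreover have Rl_z: "Rl t - z = r *\<^sub>R (?R t - z)" by (simp add: Rl_def)
  then have "\<bar>Re (Rl t - z)\<bar> = r * \<bar>Re (?R t - z)\<bar>" "\<bar>Im (Rl t - z)\<bar> = r * \<bar>Im (?R t - z)\<bar>"
    using r by (simp_all only: scaleR_complex.sel abs_mult abs_of_pos)
  ultimately have "\<bar>Re (Rl t - z)\<bar> < d" "\<bar>Im (Rl t - z)\<bar> < d"
    by simp_all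
  moreover have "Rl t \<noteq> z" using R[OF t] r by (auto simp: Rl_def)
  ultimately have "norm (crossing_map \<gamma> \<delta> (Rl t) - crossing_linearization u v (Rl t - z))
      < norm (crossing_linearization u v (Rl t - z))"
    using RlQ[OF t] Q(1) by (intro linearization) (auto simp: cbox_complex_eq)
  then show "norm ((crossing_map \<gamma> \<delta> \<circ> Rl) t - crossing_linearization u v (r *\<^sub>R (?R t - z)))
      < norm (crossing_linearization u v (r *\<^sub>R (?R t - z)) - 0)"
    unfolding Rl_z by simp
qed

text \<open>Shrinking the rectangle towards the crossing until the crossing map is dominated by its
  linearization reduces the winding around a strip with a single crossing to that of a quadrilateral.\<close>

lemma strip_winding_single_crossing:
  assumes "a \<in> {0..1}" "b \<in> {0..1}" "z \<in> crossing_params" "a < Im z" "Im z < b"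
    and "\<And>x. x \<in> crossing_params \<Longrightarrow> a \<le> Im x \<Longrightarrow> Im x \<le> b \<Longrightarrow> x = z"
  shows "strip_winding a b \<in> {1, -1}"
proof -
  have z: "0 < Re z" "Re z < 1" "Re z \<in> {0..1}" "Im z \<in> {0..1}" "\<gamma> (Re z) = \<delta> (Im z)"
    using crossing_params_interior[OF assms(3)] assms(3) by (auto simp: crossing_params_def)
  obtain u v where uv: "(\<gamma> has_vector_derivative u) (at (Re z) within {0..1})"
    "(\<delta> has_vector_derivative v) (at (Im z) within {0..1})" "transversal u v"
    using transversal_crossings[OF z(3-5)] by blast
  obtain d where "0 < d" and linearization:
    "\<And>w. Re w \<in> {0..1} \<Longrightarrow> Im w \<in> {0..1} \<Longrightarrow> \<bar>Re (w - z)\<bar> < d \<Longrightarrow> \<bar>Im (w - z)\<bar> < d \<Longrightarrow> w \<noteq> z \<Longrightarrow>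
       norm (crossing_map \<gamma> \<delta> w - crossing_linearization u v (w - z))
         < norm (crossing_linearization u v (w - z))"
    using transversal_crossing_linearization[OF uv z(5)] by blast
  define r where "r = min 1 (d / 2)"
  have r: "0 < r" "r \<le> 1" "r < d" using \<open>0 < d\<close> by (auto simp: r_def)
  have "strip_winding a b = winding_number (\<lambda>t. crossing_linearization u v (r *\<^sub>R (rectangle_loop a b t - z))) 0"
    using strip_winding_shrink[OF assms r(1,2)] winding_shrunk_rectangle_linearized[OF assms(1-5) r linearization]
    by simp
  also have "\<dots> \<in> {1, -1}"
    using uv(3) z assms(4,5) r by (intro winding_number_linearized_rectangle) auto
  finally show ?thesis .
qed

lemma lowest_crossing_in_strip:
  assumes "{x\<in>crossing_params. a < Im x \<and> Im x < b} \<noteq> {}"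
  obtains x1 c where "x1 \<in> crossing_params" "a < Im x1" "Im x1 < c" "c < b"
    "\<And>x. x \<in> crossing_params \<Longrightarrow> a < Im x \<Longrightarrow> Im x \<le> c \<Longrightarrow> x = x1"
    "\<forall>x\<in>crossing_params. Im x \<noteq> c"
    "{x\<in>crossing_params. c < Im x \<and> Im x < b} = {x\<in>crossing_params. a < Im x \<and> Im x < b} - {x1}"
proof -
  define S where "S = {x\<in>crossing_params. a < Im x \<and> Im x < b}"
  have gap: "finite (Im ` S)" "Im ` S \<noteq> {}" "\<And>h. h \<in> Im ` S \<Longrightarrow> h < b"
    using finite_crossing_params assms by (auto simp: S_def)
  then obtain c where c: "Min (Im ` S) < c" "c < b" "\<And>h. h \<in> Im ` S \<Longrightarrow> h \<noteq> Min (Im ` S) \<Longrightarrow> c < h"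
    using finite_gap_above_Min by metis
  obtain x1 where x1: "x1 \<in> S" "Im x1 = Min (Im ` S)"
    using Min_in[OF gap(1,2)] by auto
  have higher: "c < Im x" if "x \<in> S" "x \<noteq> x1" for x
  proof -
    have "Im x \<noteq> Min (Im ` S)" using that x1 crossing_params_Im_inj[of x x1] by (auto simp: S_def)
    then show ?thesis using c(3) that(1) by blast
  qed
  show thesis
  proof (rule that[of x1 c])
    show "x1 \<in> crossing_params" "a < Im x1" "Im x1 < c" "c < b" using x1 c by (auto simp: S_def)
    show only_x1: "x = x1" if "x \<in> crossing_params" "a < Im x" "Im x \<le> c" for x
      using that higher[of x] c(2) by (force simp: S_def)
    show "\<forall>x\<in>crossing_params. Im x \<noteq> c"
      using only_x1 x1 c(1) by (fastforce simp: S_def)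
    show "{x\<in>crossing_params. c < Im x \<and> Im x < b} = {x\<in>crossing_params. a < Im x \<and> Im x < b} - {x1}"
      using x1 c(1) higher unfolding S_def by fastforce
  qed
qed

lemma strip_winding_parity:
  assumes "a \<in> {0..1}" "b \<in> {0..1}" "a \<le> b" "\<forall>x\<in>crossing_params. Im x \<noteq> a \<and> Im x \<noteq> b"
  shows "\<exists>j::int. strip_winding a b = of_int (int (card {x\<in>crossing_params. a < Im x \<and> Im x < b}) + 2 * j)"
  using assms
proof (induction "card {x\<in>crossing_params. a < Im x \<and> Im x < b}" arbitrary: a rule: less_induct)
  case (less a)
  define S where "S = {x\<in>crossing_params. a < Im x \<and> Im x < b}"
  show ?case
  proof (cases "S = {}")
    case True
    then have "strip_winding a b = 0"
      using less.prems by (intro strip_winding_eq_0) (force simp: S_def)+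
    then show ?thesis using True by (auto simp flip: S_def)
  next
    case False
    obtain x1 c where x1: "x1 \<in> crossing_params" "a < Im x1" "Im x1 < c" "c < b"
      and only_x1: "\<And>x. x \<in> crossing_params \<Longrightarrow> a < Im x \<Longrightarrow> Im x \<le> c \<Longrightarrow> x = x1"
      and no_c: "\<forall>x\<in>crossing_params. Im x \<noteq> c"
      and above: "{x\<in>crossing_params. c < Im x \<and> Im x < b} = {x\<in>crossing_params. a < Im x \<and> Im x < b} - {x1}"
      using lowest_crossing_in_strip[OF False[unfolded S_def]] by blast
    have "finite S" "x1 \<in> S" using finite_crossing_params x1 by (auto simp: S_def)
    have "c \<in> {0..1}" using less.prems x1 by auto
    have "strip_winding a b = strip_winding a c + strip_winding c b"
      using less.prems \<open>c \<in> {0..1}\<close> no_c by (intro strip_winding_add) auto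
    moreover have "strip_winding a c \<in> {1, -1}"
    proof (rule strip_winding_single_crossing[of a c x1])
      fix x assume x: "x \<in> crossing_params" "a \<le> Im x" "Im x \<le> c"
      then have "a < Im x" using less.prems(4) by fastforce
      then show "x = x1" using only_x1 x by blast
    qed (use less.prems \<open>c \<in> {0..1}\<close> x1 in auto)
    moreover obtain j where "strip_winding c b = of_int (int (card (S - {x1})) + 2 * j)"
    proof -
      have "card {x\<in>crossing_params. c < Im x \<and> Im x < b} < card {x\<in>crossing_params. a < Im x \<and> Im x < b}"
        unfolding above S_def[symmetric] using \<open>finite S\<close> \<open>x1 \<in> S\<close> by (rule card_Diff1_less)
      moreover have "\<forall>x\<in>crossing_params. Im x \<noteq> c \<and> Im x \<noteq> b" using no_c less.prems(4) by blast
      ultimately have "\<exists>j. strip_winding c b = of_int (int (card {x\<in>crossing_params. c < Im x \<and> Im x < b}) + 2 * j)"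
        using less.hyps \<open>c \<in> {0..1}\<close> less.prems(2) x1(4) by simp
      then show thesis using that unfolding above S_def[symmetric] by blast
    qed
    moreover have "int (card S) = int (card (S - {x1})) + 1"
      using card_Suc_Diff1[OF \<open>finite S\<close> \<open>x1 \<in> S\<close>] by simp
    ultimately have "strip_winding a b = of_int (int (card S) + 2 * j)
        \<or> strip_winding a b = of_int (int (card S) + 2 * (j - 1))"
      by (auto simp: algebra_simps)
    then show ?thesis unfolding S_def by blast
  qed
qed

lemma crossing_count_parity:
  "\<exists>j::int. winding_number \<gamma> (\<delta> 0) - winding_number \<gamma> (\<delta> 1) + winding_number \<delta> (\<gamma> 1) - winding_number \<delta> (\<gamma> 0)
     = of_int (int (card (path_image \<gamma> \<inter> path_image \<delta>)) + 2 * j)"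
proof -
  have no_ends: "\<forall>x\<in>crossing_params. Im x \<noteq> 0 \<and> Im x \<noteq> 1"
    using crossing_params_interior by fastforce
  have "side_winding p 0 1 = winding_number \<delta> p" if "p \<notin> path_image \<delta>" for p
    using winding_number_const_minus[OF valid_\<delta> that] by (simp add: side_winding_def)
  then have "strip_winding 0 1
      = winding_number \<gamma> (\<delta> 0) - winding_number \<gamma> (\<delta> 1) + winding_number \<delta> (\<gamma> 1) - winding_number \<delta> (\<gamma> 0)"
    using strip_winding_eq[of 0 1] no_ends ends_\<gamma> by simp
  moreover have "{x\<in>crossing_params. 0 < Im x \<and> Im x < 1} = crossing_params"
    using crossing_params_interior by auto
  ultimately show ?thesis
    using strip_winding_parity[of 0 1] no_ends card_crossing_params by simp
qed

end

section \<open>Crossings of two edges of a proper embedding\<close>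

lemma smooth_curve_imp_valid_path:
  assumes "smooth_curve \<gamma>"
  shows "valid_path \<gamma>"
proof -
  obtain D where D: "\<forall>t\<in>{0..1}. (\<gamma> has_vector_derivative D t) (at t within {0..1})" "continuous_on {0..1} D"
    using assms unfolding smooth_curve_def by blast
  have "continuous_on {0..1} \<gamma>"
    using D(1) by (intro continuous_on_vector_derivative) auto
  moreover have "\<gamma> C1_differentiable_on ({0..1} - {0,1})"
    unfolding C1_differentiable_on_def
  proof (intro exI conjI ballI)
    fix x :: real assume x: "x \<in> {0..1} - {0,1}"
    then have "at x within {0..1} = at x" by (intro at_within_Icc_at) auto
    then show "(\<gamma> has_vector_derivative D x) (at x)" using D(1) x by force
  next
    show "continuous_on ({0..1} - {0,1}) D" using D(2) continuous_on_subset by blast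
  qed
  ultimately show ?thesis unfolding valid_path_def piecewise_C1_differentiable_on_def
    by (intro conjI exI[of _ "{0,1}"]) auto
qed

definition Ln_winding :: "complex \<Rightarrow> complex \<Rightarrow> complex \<Rightarrow> complex" where
  "Ln_winding p0 p1 q = (Ln (p1 - q) - Ln (p0 - q)) / (2 * of_real pi * \<i>)"

lemma winding_number_minus_Ln_winding_in_Ints:
  assumes "path g" "q \<notin> path_image g"
  shows "winding_number g q - Ln_winding (g 0) (g 1) q \<in> \<int>"
proof -
  define K where "K = winding_number g q - Ln_winding (g 0) (g 1) q"
  have nz: "g 0 - q \<noteq> 0" "g 1 - q \<noteq> 0" using assms(2) by (auto simp: path_image_def)
  have "2 * of_real pi * \<i> * Ln_winding (g 0) (g 1) q = Ln (g 1 - q) - Ln (g 0 - q)"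
    by (simp add: Ln_winding_def)
  then have "2 * of_real pi * \<i> * K = 2 * of_real pi * \<i> * winding_number g q - (Ln (g 1 - q) - Ln (g 0 - q))"
    by (simp add: K_def right_diff_distrib)
  then have "exp (2 * of_real pi * \<i> * K)
      = exp (2 * of_real pi * \<i> * winding_number g q) / exp (Ln (g 1 - q) - Ln (g 0 - q))"
    by (simp add: exp_diff)
  also have "\<dots> = 1"
    using winding_number_exp_2pi[OF assms] nz by (simp add: exp_diff pathstart_def pathfinish_def)
  finally obtain n :: int where "Re (2 * of_real pi * \<i> * K) = 0" "Im (2 * of_real pi * \<i> * K) = of_int (2 * n) * pi"
    unfolding exp_eq_1 by blast
  then have "K = of_int n" by (simp add: complex_eq_iff)
  then show ?thesis unfolding K_def by simp
qed

definition winding_defect :: "(real \<Rightarrow> complex) \<Rightarrow> complex \<Rightarrow> int" where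
  "winding_defect g q = \<lfloor>Re (winding_number g q - Ln_winding (g 0) (g 1) q)\<rfloor>"

lemma winding_number_eq_winding_defect:
  assumes "path g" "q \<notin> path_image g"
  shows "winding_number g q = of_int (winding_defect g q) + Ln_winding (g 0) (g 1) q"
proof -
  obtain n where "winding_number g q - Ln_winding (g 0) (g 1) q = of_int n"
    using winding_number_minus_Ln_winding_in_Ints[OF assms] Ints_cases by metis
  then show ?thesis by (simp add: winding_defect_def algebra_simps)
qed

text \<open>Whether the direction from \<open>y\<close> to \<open>x\<close> lies in the closed lower half plane, i.e. whether
  the principal argument jumps when \<open>x - y\<close> is replaced by \<open>y - x\<close>.\<close>

definition lower_half :: "complex \<Rightarrow> complex \<Rightarrow> int" where
  "lower_half x y = (if Arg (x - y) \<le> 0 then 1 else 0)"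

lemma lower_half_cases: "lower_half x y = 0 \<or> lower_half x y = 1"
  by (simp add: lower_half_def)

lemma Ln_diff_swap:
  assumes "x \<noteq> y"
  shows "Ln (x - y) - Ln (y - x) = \<i> * of_real pi * of_int (1 - 2 * lower_half x y)"
proof -
  have "x - y \<noteq> 0" "y - x = - (x - y)" using assms by simp_all
  then show ?thesis
    using Arg_minus[of "x - y"] by (simp add: Ln_Arg norm_minus_commute lower_half_def algebra_simps)
qed

lemma lower_half_swap:
  assumes "x \<noteq> y"
  shows "lower_half x y + lower_half y x = 1"
proof -
  have "x - y \<noteq> 0" "y - x = - (x - y)" using assms by simp_all
  then show ?thesis using Arg_minus[of "x - y"] Arg_bounded[of "x - y"] by (auto simp: lower_half_def)
qed

lemma Ln_winding_alternating_sum: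
  assumes "a \<noteq> c" "a \<noteq> d" "b \<noteq> c" "b \<noteq> d"
  shows "Ln_winding a b c - Ln_winding a b d + Ln_winding c d b - Ln_winding c d a
    = of_int (2 - lower_half b c - lower_half a d - lower_half d b - lower_half c a)"
proof -
  have "(2 * of_real pi * \<i>) * (Ln_winding a b c - Ln_winding a b d + Ln_winding c d b - Ln_winding c d a)
      = (Ln (b - c) - Ln (c - b)) + (Ln (a - d) - Ln (d - a)) + (Ln (d - b) - Ln (b - d)) + (Ln (c - a) - Ln (a - c))"
    by (simp add: Ln_winding_def field_simps)
  also have "\<dots> = (2 * of_real pi * \<i>) * of_int (2 - lower_half b c - lower_half a d - lower_half d b - lower_half c a)"
    using assms by (simp add: Ln_diff_swap algebra_simps)
  finally show ?thesis by simp
qed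

locale proper_graph_embedding =
  fixes V :: "'v set" and E :: "'v set set"
    and pos :: "'v \<Rightarrow> complex" and crv :: "'v set \<Rightarrow> real \<Rightarrow> complex"
  assumes simple: "simple_graph V E" and proper: "proper_embedding V E pos crv"
begin

lemma inj_pos: "inj_on pos V"
  and edge_subset: "e \<in> E \<Longrightarrow> e \<subseteq> V"
  and card_edge: "e \<in> E \<Longrightarrow> card e = 2"
  and inj_edge: "e \<in> E \<Longrightarrow> inj_on (crv e) {0..1}"
  and edge_endpoints: "e \<in> E \<Longrightarrow> {crv e 0, crv e 1} = pos ` e"
  and edge_interior: "e \<in> E \<Longrightarrow> t \<in> {0<..<1} \<Longrightarrow> crv e t \<notin> pos ` V"
  and valid_path_edge: "e \<in> E \<Longrightarrow> valid_path (crv e)"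
  using simple proper smooth_curve_imp_valid_path
  by (auto simp: simple_graph_def proper_embedding_def embedding_def)

lemma edge_ends:
  assumes "e \<in> E"
  obtains a b where "e = {a, b}" "a \<noteq> b" "crv e 0 = pos a" "crv e 1 = pos b"
proof -
  obtain x y where xy: "e = {x, y}" "x \<noteq> y" using card_edge[OF assms] card_2_iff by metis
  have "crv e 0 \<noteq> crv e 1" using inj_onD[OF inj_edge[OF assms], of 0 1] by auto
  moreover have "{crv e 0, crv e 1} = {pos x, pos y}" using edge_endpoints[OF assms] xy by simp
  ultimately have "crv e 0 = pos x \<and> crv e 1 = pos y \<or> crv e 0 = pos y \<and> crv e 1 = pos x"
    by (auto simp: doubleton_eq_iff)
  then show ?thesis using that xy by (metis insert_commute)
qed

lemma vertex_not_on_edge: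
  assumes "f \<in> E" "a \<in> V" "a \<notin> f"
  shows "pos a \<notin> path_image (crv f)"
proof
  assume "pos a \<in> path_image (crv f)"
  then obtain t where t: "t \<in> {0..1}" "crv f t = pos a" by (auto simp: path_image_def)
  show False
  proof (cases "t \<in> {0<..<1}")
    case True
    then show False using edge_interior[OF assms(1)] t assms(2) by auto
  next
    case False
    then have "pos a \<in> pos ` f" using t edge_endpoints[OF assms(1)] by auto
    then show False
      using assms inj_onD[OF inj_pos] edge_subset[OF assms(1)] by blast
  qed
qed

lemma crossing_not_vertex:
  assumes "e \<in> E" "f \<in> E" "e \<inter> f = {}" "s \<in> {0..1}" "crv e s \<in> path_image (crv f)"
  shows "crv e s \<notin> pos ` V"
proof
  assume vertex: "crv e s \<in> pos ` V"
  then have "s \<notin> {0<..<1}" using edge_interior[OF assms(1)] by blast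
  then have "crv e s \<in> pos ` e" using assms(4) edge_endpoints[OF assms(1)] by auto
  then obtain a where "a \<in> e" "crv e s = pos a" by auto
  then show False
    using vertex_not_on_edge[OF assms(2), of a] assms(3,5) edge_subset[OF assms(1)] by auto
qed

lemma edge_has_vector_derivative:
  assumes "e \<in> E" "t \<in> {0..1}"
  shows "(crv e has_vector_derivative vector_derivative (crv e) (at t within {0..1})) (at t within {0..1})"
proof -
  obtain D where "\<forall>t\<in>{0..1}. (crv e has_vector_derivative D t) (at t within {0..1})"
    using proper assms(1) by (auto simp: proper_embedding_def embedding_def smooth_curve_def)
  then show ?thesis
    using assms(2) vector_derivative_within_cbox[of 0 1 t "crv e"] by (force simp: cbox_interval)
qed

lemma transverse_curves_edges:
  assumes "e \<in> E" "f \<in> E" "e \<inter> f = {}"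
  shows "transverse_curves (crv e) (crv f)"
proof
  show "valid_path (crv e)" "valid_path (crv f)" "inj_on (crv e) {0..1}" "inj_on (crv f) {0..1}"
    using assms valid_path_edge inj_edge by auto
  have "e \<noteq> f" using assms(3) card_edge[OF assms(1)] by auto
  obtain a b where ab: "e = {a, b}" "crv e 0 = pos a" "crv e 1 = pos b"
    using edge_ends[OF assms(1)] by metis
  obtain c d where cd: "f = {c, d}" "crv f 0 = pos c" "crv f 1 = pos d"
    using edge_ends[OF assms(2)] by metis
  show "crv e 0 \<notin> path_image (crv f)" "crv e 1 \<notin> path_image (crv f)"
    using vertex_not_on_edge[OF assms(2)] ab assms(3) edge_subset[OF assms(1)] by auto
  show "crv f 0 \<notin> path_image (crv e)" "crv f 1 \<notin> path_image (crv e)"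
    using vertex_not_on_edge[OF assms(1)] cd assms(3) edge_subset[OF assms(2)] by auto
  have "path_image (crv e) \<inter> path_image (crv f)
      \<subseteq> {p. \<exists>e1\<in>E. \<exists>e2\<in>E. e1 \<noteq> e2 \<and> p \<in> img (crv e1) \<inter> img (crv e2) \<and> p \<notin> pos ` V}"
  proof
    fix p assume p: "p \<in> path_image (crv e) \<inter> path_image (crv f)"
    then obtain s where s: "s \<in> {0..1}" "p = crv e s" by (auto simp: path_image_def)
    then have "p \<notin> pos ` V" using crossing_not_vertex[OF assms s(1)] p by simp
    moreover have "p \<in> img (crv e)" "p \<in> img (crv f)" using p by (simp_all add: img_def path_image_def)
    ultimately show "p \<in> {p. \<exists>e1\<in>E. \<exists>e2\<in>E. e1 \<noteq> e2 \<and> p \<in> img (crv e1) \<inter> img (crv e2) \<and> p \<notin> pos ` V}"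
      using assms(1,2) \<open>e \<noteq> f\<close> by blast
  qed
  then show "finite (path_image (crv e) \<inter> path_image (crv f))"
    using proper by (auto simp: proper_embedding_def intro: finite_subset)
  fix s t assume st: "s \<in> {0..1}" "t \<in> {0..1}" "crv e s = crv f t"
  then have "crv e s \<in> path_image (crv f)" by (auto simp: path_image_def)
  then have "crv e s \<notin> pos ` V" by (rule crossing_not_vertex[OF assms st(1)])
  then have "transversal (vector_derivative (crv e) (at s within {0..1}))
      (vector_derivative (crv f) (at t within {0..1}))"
    using proper assms st \<open>e \<noteq> f\<close> unfolding proper_embedding_def by blast
  then show "\<exists>u v. (crv e has_vector_derivative u) (at s within {0..1}) \<and>
      (crv f has_vector_derivative v) (at t within {0..1}) \<and> transversal u v"
    using edge_has_vector_derivative assms st by blast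
qed

text \<open>The four winding numbers counting the crossings split into integer defects and principal
  logarithms; the logarithms of opposite differences combine into half-plane indicators.\<close>

lemma card_crossings_edges_cong:
  assumes "e \<in> E" "f \<in> E" "e \<inter> f = {}"
  shows "[int (card (img (crv e) \<inter> img (crv f)))
    = (\<Sum>v\<in>f. winding_defect (crv e) (pos v)) + (\<Sum>u\<in>e. winding_defect (crv f) (pos u))
      + (\<Sum>u\<in>e. \<Sum>v\<in>f. lower_half (pos u) (pos v))] (mod 2)"
proof -
  obtain a b where ab: "e = {a, b}" "a \<noteq> b" "crv e 0 = pos a" "crv e 1 = pos b"
    by (rule edge_ends[OF assms(1)])
  obtain c d where cd: "f = {c, d}" "c \<noteq> d" "crv f 0 = pos c" "crv f 1 = pos d"
    by (rule edge_ends[OF assms(2)])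
  interpret transverse_curves "crv e" "crv f"
    by (rule transverse_curves_edges[OF assms])
  obtain j where j: "winding_number (crv e) (pos c) - winding_number (crv e) (pos d)
      + winding_number (crv f) (pos b) - winding_number (crv f) (pos a)
      = of_int (int (card (path_image (crv e) \<inter> path_image (crv f))) + 2 * j)"
    using crossing_count_parity ab cd by auto
  have V: "a \<in> V" "b \<in> V" "c \<in> V" "d \<in> V" using edge_subset assms ab cd by auto
  have distinct: "pos a \<noteq> pos c" "pos a \<noteq> pos d" "pos b \<noteq> pos c" "pos b \<noteq> pos d"
    using assms(3) ab cd V inj_onD[OF inj_pos] by auto
  have off: "pos c \<notin> path_image (crv e)" "pos d \<notin> path_image (crv e)"
    "pos a \<notin> path_image (crv f)" "pos b \<notin> path_image (crv f)"
    using vertex_not_on_edge assms ab cd V by auto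
  define N where "N = lower_half (pos b) (pos c) + lower_half (pos a) (pos d)
    + lower_half (pos d) (pos b) + lower_half (pos c) (pos a)"
  have "of_int (int (card (path_image (crv e) \<inter> path_image (crv f))) + 2 * j)
      = (of_int (winding_defect (crv e) (pos c) - winding_defect (crv e) (pos d)
          + winding_defect (crv f) (pos b) - winding_defect (crv f) (pos a) + 2 - N) :: complex)"
    unfolding j[symmetric] N_def
    using winding_number_eq_winding_defect[OF valid_path_imp_path[OF valid_\<gamma>] off(1)]
      winding_number_eq_winding_defect[OF valid_path_imp_path[OF valid_\<gamma>] off(2)]
      winding_number_eq_winding_defect[OF valid_path_imp_path[OF valid_\<delta>] off(3)]
      winding_number_eq_winding_defect[OF valid_path_imp_path[OF valid_\<delta>] off(4)]
      Ln_winding_alternating_sum[OF distinct] ab cd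
    by (simp add: algebra_simps)
  then have card: "int (card (path_image (crv e) \<inter> path_image (crv f))) + 2 * j
      = winding_defect (crv e) (pos c) - winding_defect (crv e) (pos d)
        + winding_defect (crv f) (pos b) - winding_defect (crv f) (pos a) + 2 - N"
    using of_int_eq_iff by blast
  have "lower_half (pos d) (pos b) = 1 - lower_half (pos b) (pos d)"
    "lower_half (pos c) (pos a) = 1 - lower_half (pos a) (pos c)"
    using lower_half_swap distinct by (metis add_diff_cancel_left')+
  then show ?thesis
    unfolding cong_iff_lin using ab cd card
    by (intro exI[of _ "winding_defect (crv e) (pos d) + winding_defect (crv f) (pos a)
        + lower_half (pos b) (pos c) + lower_half (pos a) (pos d) + j"])
       (simp add: N_def img_def path_image_def algebra_simps)
qed

end

section \<open>Comparing two embeddings\<close>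

lemma cong_double_iff:
  fixes a b :: int
  shows "[2 * a = 2 * b] (mod 4) \<longleftrightarrow> [a = b] (mod 2)"
  unfolding cong_iff_dvd_diff right_diff_distrib[symmetric] by presburger

definition parity_sign :: "int \<Rightarrow> 'a::comm_ring_1" where
  "parity_sign k = (if even k then 1 else -1)"

lemma parity_sign_add: "parity_sign (a + b) = parity_sign a * parity_sign b"
  by (auto simp: parity_sign_def)

lemma parity_sign_cong: "[a = b] (mod 2) \<Longrightarrow> parity_sign a = parity_sign b"
  by (auto simp: parity_sign_def cong_iff_lin)

lemma parity_sign_of_nat: "parity_sign (int n) = (-1) ^ n"
  by (simp add: parity_sign_def minus_one_power_iff)

lemma parity_sign_sum: "parity_sign (\<Sum>x\<in>A. f x) = (\<Prod>x\<in>A. parity_sign (f x))"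
  by (induction A rule: infinite_finite_induct) (simp_all add: parity_sign_add, simp_all add: parity_sign_def)

lemma parity_sign_cases: "parity_sign k = 1 \<or> parity_sign k = -1"
  by (simp add: parity_sign_def)

lemma sum_unordered_pairs:
  assumes "finite M"
  shows "(\<Sum>P\<in>{P. P \<subseteq> M \<and> card P = 2}. \<Sum>e\<in>P. \<Sum>f\<in>P - {e}. h e f) = (\<Sum>e\<in>M. \<Sum>f\<in>M - {e}. h e f)"
proof -
  let ?D = "Sigma M (\<lambda>e. M - {e})" and ?P = "{P. P \<subseteq> M \<and> card P = 2}"
  have "finite ?P" using assms by (auto intro: finite_subset[of _ "Pow M"])
  have fiber: "{x\<in>?D. {fst x, snd x} = P} = Sigma P (\<lambda>e. P - {e})" if P: "P \<in> ?P" for P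
  proof -
    obtain x y where "P = {x, y}" "x \<noteq> y" "x \<in> M" "y \<in> M" using P by (auto simp: card_2_iff)
    then show ?thesis by (auto simp: doubleton_eq_iff)
  qed
  have "(\<Sum>P\<in>?P. \<Sum>e\<in>P. \<Sum>f\<in>P - {e}. h e f) = (\<Sum>P\<in>?P. \<Sum>(e, f)\<in>{x\<in>?D. {fst x, snd x} = P}. h e f)"
  proof (rule sum.cong[OF refl])
    fix P assume P: "P \<in> ?P"
    then have "finite P" using assms finite_subset[of P M] by simp
    then show "(\<Sum>e\<in>P. \<Sum>f\<in>P - {e}. h e f) = (\<Sum>(e, f)\<in>{x\<in>?D. {fst x, snd x} = P}. h e f)"
      unfolding fiber[OF P] by (simp add: sum.Sigma)
  qed
  also have "\<dots> = (\<Sum>(e, f)\<in>?D. h e f)"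
  proof (rule sum.group)
    show "(\<lambda>x. {fst x, snd x}) ` ?D \<subseteq> ?P" by auto
  qed (use assms \<open>finite ?P\<close> in auto)
  also have "\<dots> = (\<Sum>e\<in>M. \<Sum>f\<in>M - {e}. h e f)"
    using assms by (simp add: sum.Sigma)
  finally show ?thesis .
qed

lemma perfect_matching_finite:
  assumes "simple_graph V E" "perfect_matching V E M"
  shows "finite M"
proof -
  have "M \<subseteq> Pow V" "finite V" using assms by (auto simp: simple_graph_def perfect_matching_def)
  then show ?thesis by (meson finite_Pow_iff finite_subset)
qed

lemma perfect_matching_disjoint:
  assumes "simple_graph V E" "perfect_matching V E M" "e \<in> M" "f \<in> M" "e \<noteq> f"
  shows "e \<inter> f = {}"
proof (rule ccontr)
  assume "e \<inter> f \<noteq> {}"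
  then obtain v where "v \<in> e" "v \<in> f" by auto
  moreover have "v \<in> V" using assms calculation by (auto simp: simple_graph_def perfect_matching_def)
  ultimately show False using assms by (auto simp: perfect_matching_def)
qed

lemma sum_perfect_matching:
  assumes "simple_graph V E" "perfect_matching V E M"
  shows "(\<Sum>e\<in>M. sum F e) = sum F V"
proof -
  have edge: "e \<subseteq> V" "finite e" if "e \<in> M" for e
    using assms that by (auto simp: simple_graph_def perfect_matching_def intro: finite_subset)
  have "\<Union>M = V"
  proof
    show "\<Union>M \<subseteq> V" using edge by blast
    show "V \<subseteq> \<Union>M"
    proof
      fix v assume "v \<in> V"
      then obtain e where "e \<in> M" "v \<in> e" using assms(2) unfolding perfect_matching_def by metis
      then show "v \<in> \<Union>M" by blast
    qed
  qed
  moreover have "sum F (\<Union>M) = (\<Sum>e\<in>M. sum F e)"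
    using sum.Union_disjoint[of M F] perfect_matching_finite[OF assms] edge perfect_matching_disjoint[OF assms]
    by (simp add: o_def)
  ultimately show ?thesis by simp
qed

lemma sum_perfect_matching_Diff:
  fixes F :: "'v \<Rightarrow> 'a::cancel_comm_monoid_add"
  assumes "simple_graph V E" "perfect_matching V E M" "e \<in> M"
  shows "(\<Sum>f\<in>M - {e}. sum F f) = sum F (V - e)"
proof -
  have "e \<subseteq> V" "finite V"
    using assms by (auto simp: simple_graph_def perfect_matching_def)
  then have "sum F V = sum F e + sum F (V - e)" by (metis sum.subset_diff add.commute)
  moreover have "(\<Sum>f\<in>M. sum F f) = sum F e + (\<Sum>f\<in>M - {e}. sum F f)"
    using perfect_matching_finite[OF assms(1,2)] assms(3) by (rule sum.remove)
  ultimately show ?thesis using sum_perfect_matching[OF assms(1,2), of F] by (metis add_left_cancel)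
qed

lemma even_sum_commuting_pairs:
  assumes "finite S" "\<And>u v. u \<in> S \<Longrightarrow> v \<in> S \<Longrightarrow> u \<noteq> v \<Longrightarrow> h v u = h u v"
  shows "even (\<Sum>u\<in>S. \<Sum>v\<in>S - {u}. h u v :: int)"
proof -
  have pair_even: "even (\<Sum>u\<in>P. \<Sum>v\<in>P - {u}. h u v)" if P: "P \<subseteq> S" "card P = 2" for P
  proof -
    obtain x y where xy: "P = {x, y}" "x \<noteq> y" using P(2) by (auto simp: card_2_iff)
    then have "h y x = h x y" using assms(2) P(1) by blast
    then show ?thesis using xy by (simp add: insert_Diff_if)
  qed
  have "even (\<Sum>P\<in>{P. P \<subseteq> S \<and> card P = 2}. \<Sum>u\<in>P. \<Sum>v\<in>P - {u}. h u v)"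
    by (rule dvd_sum) (simp add: pair_even)
  then show ?thesis unfolding sum_unordered_pairs[OF assms(1)] .
qed

locale two_proper_embeddings =
  A: proper_graph_embedding V E pos crv + B: proper_graph_embedding V E pos' crv'
  for V :: "'v set" and E pos crv pos' crv'
begin

definition half_plane_flip :: "'v \<Rightarrow> 'v \<Rightarrow> int" where
  "half_plane_flip u v = (lower_half (pos u) (pos v) - lower_half (pos' u) (pos' v))\<^sup>2"

definition defect_sum :: "'v set \<Rightarrow> 'v set \<Rightarrow> int" where
  "defect_sum e W = (\<Sum>v\<in>W. winding_defect (crv e) (pos v) + winding_defect (crv' e) (pos' v))"

definition flips_between :: "'v set \<Rightarrow> 'v set \<Rightarrow> int" where
  "flips_between e f = (\<Sum>u\<in>e. \<Sum>v\<in>f. half_plane_flip u v)"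

definition total_flips :: int where
  "total_flips = (\<Sum>u\<in>V. \<Sum>v\<in>V - {u}. half_plane_flip u v)"

definition edge_flips :: "'v set \<Rightarrow> int" where
  "edge_flips e = (\<Sum>u\<in>e. \<Sum>v\<in>e - {u}. half_plane_flip u v)"

lemma half_plane_flip_commute:
  assumes "u \<in> V" "v \<in> V" "u \<noteq> v"
  shows "half_plane_flip v u = half_plane_flip u v"
proof -
  have "pos u \<noteq> pos v" "pos' u \<noteq> pos' v"
    using assms A.inj_pos B.inj_pos by (metis inj_onD)+
  then show ?thesis
    using lower_half_swap[of "pos u" "pos v"] lower_half_swap[of "pos' u" "pos' v"]
    by (simp add: half_plane_flip_def power2_commute eq_diff_eq[symmetric])
qed

lemma even_total_flips: "even total_flips"
  unfolding total_flips_def using A.simple half_plane_flip_commute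
  by (intro even_sum_commuting_pairs) (auto simp: simple_graph_def)

lemma even_edge_flips:
  assumes "e \<in> E"
  shows "even (edge_flips e)"
  unfolding edge_flips_def using A.edge_subset[OF assms] A.card_edge[OF assms] half_plane_flip_commute
  by (intro even_sum_commuting_pairs) (auto intro: card_ge_0_finite)

lemma flips_between_commute:
  assumes "e \<in> E" "f \<in> E" "e \<inter> f = {}"
  shows "flips_between f e = flips_between e f"
  unfolding flips_between_def using assms A.edge_subset half_plane_flip_commute
  by (subst sum.swap) (intro sum.cong refl; blast)

text \<open>For two drawings, the vertex-position terms of the crossing parities add up, modulo 4 after
  doubling, to a term symmetric in the two edges, since \<open>n + n' = (n - n')\<^sup>2 + 2 n n'\<close> for
  \<open>n, n' \<in> {0, 1}\<close>.\<close>

lemma card_crossings_edges_two_embeddings_cong: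
  assumes "e \<in> E" "f \<in> E" "e \<inter> f = {}"
  shows "[2 * (int (card (img (crv e) \<inter> img (crv f))) + int (card (img (crv' e) \<inter> img (crv' f))))
    = (2 * defect_sum e f + flips_between e f) + (2 * defect_sum f e + flips_between f e)] (mod 4)"
proof -
  obtain k where k: "(\<Sum>v\<in>f. winding_defect (crv e) (pos v)) + (\<Sum>u\<in>e. winding_defect (crv f) (pos u))
      + (\<Sum>u\<in>e. \<Sum>v\<in>f. lower_half (pos u) (pos v)) = int (card (img (crv e) \<inter> img (crv f))) + 2 * k"
    using A.card_crossings_edges_cong[OF assms] unfolding cong_iff_lin by blast
  obtain k' where k': "(\<Sum>v\<in>f. winding_defect (crv' e) (pos' v)) + (\<Sum>u\<in>e. winding_defect (crv' f) (pos' u))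
      + (\<Sum>u\<in>e. \<Sum>v\<in>f. lower_half (pos' u) (pos' v)) = int (card (img (crv' e) \<inter> img (crv' f))) + 2 * k'"
    using B.card_crossings_edges_cong[OF assms] unfolding cong_iff_lin by blast
  define m where "m = (\<Sum>u\<in>e. \<Sum>v\<in>f. lower_half (pos u) (pos v) * lower_half (pos' u) (pos' v))"
  have "lower_half x y + lower_half x' y' = (lower_half x y - lower_half x' y')\<^sup>2 + 2 * (lower_half x y * lower_half x' y')"
    for x y x' y'
    using lower_half_cases[of x y] lower_half_cases[of x' y'] by auto
  then have "(\<Sum>u\<in>e. \<Sum>v\<in>f. lower_half (pos u) (pos v)) + (\<Sum>u\<in>e. \<Sum>v\<in>f. lower_half (pos' u) (pos' v))
      = flips_between e f + 2 * m"
    unfolding flips_between_def half_plane_flip_def m_def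
    by (simp add: sum.distrib[symmetric] sum_distrib_left)
  then show ?thesis
    unfolding cong_iff_lin flips_between_commute[OF assms]
    by (intro exI[of _ "k + k' - m"]) (use k k' in \<open>simp add: defect_sum_def sum.distrib algebra_simps\<close>)
qed

lemma sum_other_edges_weights:
  assumes M: "perfect_matching V E M" and e: "e \<in> M"
  shows "(\<Sum>f\<in>M - {e}. 2 * defect_sum e f + flips_between e f)
    = 2 * defect_sum e (V - e) + (\<Sum>u\<in>e. \<Sum>v\<in>V - {u}. half_plane_flip u v) - edge_flips e"
proof -
  have "e \<subseteq> V" "finite V" using M e A.edge_subset A.simple by (auto simp: simple_graph_def perfect_matching_def)
  have "(\<Sum>f\<in>M - {e}. defect_sum e f) = defect_sum e (V - e)"
    unfolding defect_sum_def by (rule sum_perfect_matching_Diff[OF A.simple M e])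
  moreover have "(\<Sum>f\<in>M - {e}. flips_between e f) = (\<Sum>u\<in>e. \<Sum>v\<in>V - e. half_plane_flip u v)"
    unfolding flips_between_def
    by (subst sum.swap) (intro sum.cong refl sum_perfect_matching_Diff[OF A.simple M e])
  moreover have "(\<Sum>v\<in>V - e. half_plane_flip u v) = (\<Sum>v\<in>V - {u}. half_plane_flip u v) - (\<Sum>v\<in>e - {u}. half_plane_flip u v)"
    if "u \<in> e" for u
  proof -
    have "V - e = (V - {u}) - (e - {u})" using that by auto
    then show ?thesis using \<open>e \<subseteq> V\<close> \<open>finite V\<close> by (simp only:) (rule sum_diff; auto)
  qed
  ultimately show ?thesis
    by (simp add: sum.distrib sum_distrib_left[symmetric] sum_subtractf edge_flips_def)
qed

lemma crossings_two_embeddings_cong: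
  assumes M: "perfect_matching V E M"
  shows "[2 * (int (crossings crv M) + int (crossings crv' M))
    = 2 * (\<Sum>e\<in>M. defect_sum e (V - e)) + total_flips - (\<Sum>e\<in>M. edge_flips e)] (mod 4)"
proof -
  let ?P = "{P. P \<subseteq> M \<and> card P = 2}"
  let ?h = "\<lambda>e f. 2 * defect_sum e f + flips_between e f"
  have ME: "M \<subseteq> E" using M by (simp add: perfect_matching_def)
  have "2 * (int (crossings crv M) + int (crossings crv' M))
      = (\<Sum>P\<in>?P. 2 * (int (card (\<Inter>e\<in>P. img (crv e))) + int (card (\<Inter>e\<in>P. img (crv' e)))))"
    by (simp add: crossings_def sum.distrib sum_distrib_left)
  also have "[\<dots> = (\<Sum>P\<in>?P. \<Sum>e\<in>P. \<Sum>f\<in>P - {e}. ?h e f)] (mod 4)"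
  proof (rule cong_sum)
    fix P assume "P \<in> ?P"
    then obtain e f where ef: "P = {e, f}" "e \<noteq> f" "e \<in> M" "f \<in> M" by (auto simp: card_2_iff)
    then have "e \<inter> f = {}" using perfect_matching_disjoint[OF A.simple M] by blast
    then show "[2 * (int (card (\<Inter>e\<in>P. img (crv e))) + int (card (\<Inter>e\<in>P. img (crv' e))))
        = (\<Sum>e\<in>P. \<Sum>f\<in>P - {e}. ?h e f)] (mod 4)"
      using card_crossings_edges_two_embeddings_cong[of e f] ef ME by (auto simp: insert_Diff_if)
  qed
  also have "(\<Sum>P\<in>?P. \<Sum>e\<in>P. \<Sum>f\<in>P - {e}. ?h e f) = (\<Sum>e\<in>M. \<Sum>f\<in>M - {e}. ?h e f)"
    by (rule sum_unordered_pairs[OF perfect_matching_finite[OF A.simple M]])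
  also have "\<dots> = (\<Sum>e\<in>M. 2 * defect_sum e (V - e) + (\<Sum>u\<in>e. \<Sum>v\<in>V - {u}. half_plane_flip u v) - edge_flips e)"
    using sum_other_edges_weights[OF M] by simp
  also have "\<dots> = 2 * (\<Sum>e\<in>M. defect_sum e (V - e)) + total_flips - (\<Sum>e\<in>M. edge_flips e)"
    unfolding total_flips_def sum_perfect_matching[OF A.simple M, symmetric]
    by (simp add: sum.distrib sum_subtractf sum_distrib_left)
  finally show ?thesis .
qed

lemma crossing_sign_two_embeddings:
  assumes M: "perfect_matching V E M"
  shows "((-1) ^ crossings crv M :: 'r::comm_ring_1) = parity_sign (total_flips div 2)
    * (\<Prod>e\<in>M. parity_sign (defect_sum e (V - e) - edge_flips e div 2)) * (-1) ^ crossings crv' M"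
proof -
  have "(\<Sum>e\<in>M. edge_flips e) = 2 * (\<Sum>e\<in>M. edge_flips e div 2)"
    using M even_edge_flips unfolding sum_distrib_left perfect_matching_def by (intro sum.cong) auto
  then have "[2 * (int (crossings crv M) + int (crossings crv' M))
      = 2 * ((\<Sum>e\<in>M. defect_sum e (V - e) - edge_flips e div 2) + total_flips div 2)] (mod 4)"
    using crossings_two_embeddings_cong[OF M] even_total_flips
    by (simp add: sum_subtractf algebra_simps)
  then have "[int (crossings crv M) + int (crossings crv' M)
      = (\<Sum>e\<in>M. defect_sum e (V - e) - edge_flips e div 2) + total_flips div 2] (mod 2)"
    by (simp only: cong_double_iff)
  then obtain k where "(\<Sum>e\<in>M. defect_sum e (V - e) - edge_flips e div 2) + total_flips div 2
      = int (crossings crv M) + int (crossings crv' M) + 2 * k"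
    by (auto simp: cong_iff_lin)
  then have "[int (crossings crv M)
      = (\<Sum>e\<in>M. defect_sum e (V - e) - edge_flips e div 2) + total_flips div 2 + int (crossings crv' M)] (mod 2)"
    unfolding cong_iff_lin by (intro exI[of _ "k + int (crossings crv' M)"]) (simp add: algebra_simps)
  then have "parity_sign (int (crossings crv M)) = (parity_sign
      ((\<Sum>e\<in>M. defect_sum e (V - e) - edge_flips e div 2) + total_flips div 2 + int (crossings crv' M)) :: 'r)"
    by (rule parity_sign_cong)
  then show ?thesis by (simp add: parity_sign_add parity_sign_sum parity_sign_of_nat mult_ac)
qed

end

lemma crossings_empty: "crossings crv {} = 0"
  unfolding crossings_def by (simp cong: conj_cong)

text \<open>Multiplying \<open>\<sigma>\<close> by \<open>s\<close> on the edges at \<open>v0\<close> puts the factor \<open>s\<close> into the product over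
  every perfect matching, which contains exactly one such edge.\<close>

lemma perfect_matching_absorb_sign:
  fixes \<sigma> :: "'v set \<Rightarrow> 'r::comm_ring_1"
  assumes "simple_graph V E" "v0 \<in> V" "s = 1 \<or> s = -1" "\<And>e. e \<in> E \<Longrightarrow> \<sigma> e = 1 \<or> \<sigma> e = -1"
  shows "\<exists>\<tau>. (\<forall>e\<in>E. \<tau> e = 1 \<or> \<tau> e = -1)
    \<and> (\<forall>M. perfect_matching V E M \<longrightarrow> (\<Prod>e\<in>M. \<tau> e) = s * (\<Prod>e\<in>M. \<sigma> e))"
proof (intro exI conjI ballI allI impI)
  define \<tau> where "\<tau> e = (if v0 \<in> e then s else 1) * \<sigma> e" for e
  show "\<tau> e = 1 \<or> \<tau> e = -1" if "e \<in> E" for e using assms(3) assms(4)[OF that] by (auto simp: \<tau>_def)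
  fix M assume M: "perfect_matching V E M"
  then have "\<exists>!e. e \<in> M \<and> v0 \<in> e" using assms(2) by (simp add: perfect_matching_def)
  then obtain e0 where e0: "e0 \<in> M" "v0 \<in> e0" and only_e0: "\<And>e. e \<in> M \<Longrightarrow> v0 \<in> e \<Longrightarrow> e = e0"
    by (elim ex1E) blast
  have "(\<Prod>e\<in>M - {e0}. if v0 \<in> e then s else 1) = 1"
  proof (rule prod.neutral, rule ballI)
    fix e assume "e \<in> M - {e0}"
    then have "v0 \<notin> e" using only_e0 by blast
    then show "(if v0 \<in> e then s else 1) = 1" by simp
  qed
  then have "(\<Prod>e\<in>M. if v0 \<in> e then s else 1) = s"
    using prod.remove[OF perfect_matching_finite[OF assms(1) M] e0(1), of "\<lambda>e. if v0 \<in> e then s else 1"] e0(2)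
    by simp
  then show "(\<Prod>e\<in>M. \<tau> e) = s * (\<Prod>e\<in>M. \<sigma> e)" by (simp add: \<tau>_def prod.distrib)
qed

lemma signed_pm_sign_modification:
  fixes \<omega> \<sigma> :: "'v set \<Rightarrow> 'r::comm_ring_1" and s :: 'r
  assumes "simple_graph V E" "s = 1 \<or> s = -1" "\<And>e. e \<in> E \<Longrightarrow> \<sigma> e = 1 \<or> \<sigma> e = -1"
    and "\<And>M. perfect_matching V E M \<Longrightarrow> (-1) ^ crossings crv M = s * (\<Prod>e\<in>M. \<sigma> e) * (-1) ^ crossings crv' M"
  shows "\<exists>\<omega>'. sign_modification E \<omega> \<omega>' \<and> signed_pm V E \<omega> crv = signed_pm V E \<omega>' crv'"
proof -
  obtain \<tau> where \<tau>: "\<forall>e\<in>E. \<tau> e = 1 \<or> \<tau> e = -1"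
    and prod_\<tau>: "\<forall>M. perfect_matching V E M \<longrightarrow> (\<Prod>e\<in>M. \<tau> e) = s * (\<Prod>e\<in>M. \<sigma> e)"
  proof (cases "V = {}")
    case True
    then have "perfect_matching V E {}"
      using assms(1) by (auto simp: perfect_matching_def simple_graph_def)
    then have "s = 1" using assms(4)[of "{}"] by (simp add: crossings_empty)
    then show thesis using assms(3) by (intro that[of \<sigma>]) simp_all
  next
    case False
    then obtain v0 where "v0 \<in> V" by blast
    then show thesis using perfect_matching_absorb_sign[where \<sigma> = \<sigma>, OF assms(1) \<open>v0 \<in> V\<close> assms(2) assms(3)] that by blast
  qed
  define \<omega>' where "\<omega>' e = \<omega> e * \<tau> e" for e
  have "sign_modification E \<omega> \<omega>'"
    unfolding sign_modification_def \<omega>'_def using \<tau> by force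
  moreover have "signed_pm V E \<omega> crv = signed_pm V E \<omega>' crv'"
    unfolding signed_pm_def \<omega>'_def prod.distrib
    by (intro sum.cong refl) (simp add: assms(4) prod_\<tau> mult_ac)
  ultimately show ?thesis by blast
qed

theorem theorem2:
  fixes V :: "'v set" and E :: "'v set set" and \<omega> :: "'v set \<Rightarrow> 'r::comm_ring_1"
    and pos pos' :: "'v \<Rightarrow> complex" and crv crv' :: "'v set \<Rightarrow> real \<Rightarrow> complex"
  assumes "simple_graph V E"
    and "\<forall>e\<in>E. \<omega> e \<noteq> 0"
    and "proper_embedding V E pos crv"
    and "proper_embedding V E pos' crv'"
  shows "\<exists>\<omega>'. sign_modification E \<omega> \<omega>' \<and> signed_pm V E \<omega> crv = signed_pm V E \<omega>' crv'"
proof -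
  \<comment> \<open>The weights need not be nonzero: the sign changes depend on the two embeddings only.\<close>
  interpret two_proper_embeddings V E pos crv pos' crv'
    using assms(1,3,4) by unfold_locales
  show ?thesis
    by (rule signed_pm_sign_modification[OF assms(1) parity_sign_cases parity_sign_cases
          crossing_sign_two_embeddings])
qed

end
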